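(* There is an absolute constant $K>0$ such that the following holds. Let $n\ge2$, let $A\in\mathbb{R}^{n\times n}$ be symmetric with zero diagonal, let $\lambda>0$ with $\lambda\ge\max_i\sum_j|A_{ij}|$, let $p_1,\dots,p_n\in[0,1)$ be known with $p_{\max}=\max_ip_i$, and let $\epsilon>0$, $\delta\in(0,1)$. Suppose $$T\ge\max\left\{16\log(2n-1),\ K\,\epsilon^{-4}(1-p_{\max})^{-4}\exp\Big(\big(\tfrac{2}{1-p_{\max}}+10\big)\lambda\Big)\log\frac n\delta\right\}$$ and run the missing-data SMG algorithm with $T$ iterations and step size $\eta=\frac{(1-p_{\max})^2}{2}\exp\big(-\frac{\lambda}{1-p_{\max}}\big)\sqrt{\frac{\log(2n-1)}{T}}$. Then with probability at least $1-\delta$ its output $\bar w$ satisfies $$\big|\bar w_i-\bar w_{n-1+i}-A_{ni}\big|\le\epsilon\quad\text{for all } i\in[n-1].$$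
   Context: Ising model $\mathcal{D}=\mathcal{D}(A,0)$ on $\{-1,1\}^n$: $\Pr[Z=z]\propto\exp\big(\sum_{i<j}A_{ij}z_iz_j\big)$. Missing-data distribution $\mathcal{D}_{\mathsf{miss}}$: draw $Z\sim\mathcal{D}$ and independent $C_1,\dots,C_n\in\{0,1\}$ with $\Pr[C_i=1]=1-p_i$; output $X$ with $X_i=C_iZ_i$. Estimator: for $w\in\mathbb{R}^{2n-1}$, $X\in\{-1,0,1\}^n$, $v_j=w_j-w_{n-1+j}$, and $i\in[n-1]$, $$g^i_{\mathsf{miss}}(w;X)=-\frac{X_n}{1-p_n}\cdot\frac{\exp(-v_iX_nX_i)X_i}{1-p_i}\cdot\prod_{j\in[n-1],\,j\ne i}\frac{\exp(-v_jX_nX_j)-p_j}{1-p_j},$$ $G_{\mathsf{miss}}(w;X)=\sum_{i=1}^{n-1}g^i_{\mathsf{miss}}(w;X)(e^i-e^{n-1+i})\in\mathbb{R}^{2n-1}$ ($e^i$ standard basis vectors). Missing-data SMG algorithm (for vertex $n$): set $w^1_i=\lambda/(2n-1)$ for $i\in[2n-1]$; for $t=1,\dots,T$, draw a fresh independent sample $X^t\sim\mathcal{D}_{\mathsf{miss}}$, let $G^t=G_{\mathsf{miss}}(w^t;X^t)$, $C^t=(w^t)^TG^t/\lambda$, and set $w^{t+1}_i=w^t_i(1-\eta G^t_i+\eta C^t)$ for all $i$; output $\bar w=\frac1T\sum_{t=1}^Tw^t$. *)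

theory Defs
  imports "HOL-Probability.Probability"
begin

text \<open>Vertices are 1..n. A configuration is a function nat => real that takes
values in {-1,1} on {1..n} and is 0 elsewhere.\<close>

definition ising_configs :: "nat \<Rightarrow> (nat \<Rightarrow> real) set" where
  "ising_configs n = {z. (\<forall>i\<in>{1..n}. z i = -1 \<or> z i = 1) \<and> (\<forall>i. i \<notin> {1..n} \<longrightarrow> z i = 0)}"

definition ising_energy :: "nat \<Rightarrow> (nat \<Rightarrow> nat \<Rightarrow> real) \<Rightarrow> (nat \<Rightarrow> real) \<Rightarrow> real" where
  "ising_energy n A z = (\<Sum>i\<in>{1..n}. \<Sum>j\<in>{i<..n}. A i j * z i * z j)"

definition ising_pmf :: "nat \<Rightarrow> (nat \<Rightarrow> nat \<Rightarrow> real) \<Rightarrow> (nat \<Rightarrow> real) pmf" where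
  "ising_pmf n A = embed_pmf (\<lambda>z. if z \<in> ising_configs n
       then exp (ising_energy n A z) / (\<Sum>y\<in>ising_configs n. exp (ising_energy n A y)) else 0)"

definition miss_pmf :: "nat \<Rightarrow> (nat \<Rightarrow> nat \<Rightarrow> real) \<Rightarrow> (nat \<Rightarrow> real) \<Rightarrow> (nat \<Rightarrow> real) pmf" where
  "miss_pmf n A p = do {
      z \<leftarrow> ising_pmf n A;
      c \<leftarrow> Pi_pmf {1..n} False (\<lambda>i. bernoulli_pmf (1 - p i));
      return_pmf (\<lambda>i. if c i then z i else 0) }"

definition g_miss :: "nat \<Rightarrow> (nat \<Rightarrow> real) \<Rightarrow> (nat \<Rightarrow> real) \<Rightarrow> (nat \<Rightarrow> real) \<Rightarrow> nat \<Rightarrow> real" where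
  "g_miss n p w X i =
     (let v = (\<lambda>j. w j - w (n - 1 + j)) in
       - (X n / (1 - p n)) * (exp (- v i * X n * X i) * X i / (1 - p i)) *
       (\<Prod>j\<in>{1..n-1} - {i}. (exp (- v j * X n * X j) - p j) / (1 - p j)))"

text \<open>G_miss(w;X) = sum_i g^i (e^i - e^{n-1+i}), a vector indexed by 1..2n-1.\<close>
definition G_miss :: "nat \<Rightarrow> (nat \<Rightarrow> real) \<Rightarrow> (nat \<Rightarrow> real) \<Rightarrow> (nat \<Rightarrow> real) \<Rightarrow> nat \<Rightarrow> real" where
  "G_miss n p w X k =
     (if 1 \<le> k \<and> k \<le> n - 1 then g_miss n p w X k
      else if n \<le> k \<and> k \<le> 2 * n - 2 then - g_miss n p w X (k - (n - 1))
      else 0)"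

definition smg_step :: "nat \<Rightarrow> (nat \<Rightarrow> real) \<Rightarrow> real \<Rightarrow> real \<Rightarrow> (nat \<Rightarrow> real) \<Rightarrow> (nat \<Rightarrow> real) \<Rightarrow> (nat \<Rightarrow> real)" where
  "smg_step n p lam eta w X =
     (let G = G_miss n p w X;
          C = (\<Sum>i\<in>{1..2*n-1}. w i * G i) / lam
      in (\<lambda>i. w i * (1 - eta * G i + eta * C)))"

text \<open>smg_iterate n p lam eta xs k = w^{k+1}, where sample X^t = xs t (t = 1..T).\<close>
fun smg_iterate :: "nat \<Rightarrow> (nat \<Rightarrow> real) \<Rightarrow> real \<Rightarrow> real \<Rightarrow> (nat \<Rightarrow> nat \<Rightarrow> real) \<Rightarrow> nat \<Rightarrow> (nat \<Rightarrow> real)" where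
  "smg_iterate n p lam eta xs 0 = (\<lambda>i. lam / real (2 * n - 1))"
| "smg_iterate n p lam eta xs (Suc k) = smg_step n p lam eta (smg_iterate n p lam eta xs k) (xs (Suc k))"

definition smg_output :: "nat \<Rightarrow> (nat \<Rightarrow> real) \<Rightarrow> real \<Rightarrow> real \<Rightarrow> nat \<Rightarrow> (nat \<Rightarrow> nat \<Rightarrow> real) \<Rightarrow> (nat \<Rightarrow> real)" where
  "smg_output n p lam eta T xs = (\<lambda>i. (\<Sum>k<T. smg_iterate n p lam eta xs k i) / real T)"

definition miss_samples :: "nat \<Rightarrow> (nat \<Rightarrow> nat \<Rightarrow> real) \<Rightarrow> (nat \<Rightarrow> real) \<Rightarrow> nat \<Rightarrow> (nat \<Rightarrow> nat \<Rightarrow> real) pmf" where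
  "miss_samples n A p T = Pi_pmf {1..T} (\<lambda>_. 0) (\<lambda>_. miss_pmf n A p)"

end

theory Submission
  imports Defs
begin

text \<open>
The estimator \<open>g_miss\<close> is an unbiased estimate of the gradient of the screening loss
\<open>S(\<theta>) = E[exp(- Z\<^sub>n \<Sum>\<^sub>j\<^sub><\<^sub>n \<theta>\<^sub>j Z\<^sub>j)]\<close>: each observed factor is corrected for the
probability of being missing, and the factors are independent given \<open>Z\<close>. Flipping \<open>Z\<^sub>n\<close> shows
that the true row \<open>A\<^sub>n\<close> is a stationary point of the convex function \<open>S\<close>, and flipping
\<open>Z\<^sub>i\<close> shows that \<open>S\<close> grows quadratically in \<open>\<theta>\<^sub>i - A\<^sub>n\<^sub>i\<close> around it.
The algorithm is exponentiated gradient descent on the simplex of radius \<open>\<lambda>\<close> (the \<open>\<ell>\<^sub>1\<close>-ball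
written with positive and negative parts), whose regret against \<open>A\<^sub>n\<close> is
\<open>O(\<lambda> B \<surd>(T log n))\<close> when the estimates are bounded by \<open>B\<close>. Replacing the true gradients by
the estimates costs a sum of bounded martingale differences, controlled by Azuma-Hoeffding.
By convexity the averaged iterate then has small excess loss, and quadratic growth turns
this into the coordinatewise error bound.
\<close>

section \<open>Azuma-Hoeffding inequality for product distributions\<close>

lemma nn_integral_exp_centered_le:
  fixes M :: "'a pmf" and F :: "'a \<Rightarrow> real"
  assumes "s > 0" "c \<ge> 0" "\<And>y. y \<in> set_pmf M \<Longrightarrow> \<bar>F y\<bar> \<le> c"
    "measure_pmf.expectation M F = 0"
  shows "(\<integral>\<^sup>+y. ennreal (exp (s * F y)) \<partial>measure_pmf M) \<le> ennreal (exp (s\<^sup>2 * c\<^sup>2 / 2))"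
proof -
  interpret interval_bounded_random_variable "measure_pmf M" F "-c" c
    by unfold_locales (auto simp: AE_measure_pmf_iff intro: assms(3)[THEN abs_le_D1] dest: assms(3) )
  have "(\<integral>\<^sup>+y. ennreal (exp (s * F y)) \<partial>measure_pmf M) \<le> ennreal (exp (s\<^sup>2 * (c - - c)\<^sup>2 / 8))"
    by (rule Hoeffdings_lemma_nn_integral_0) (use assms in auto)
  also have "s\<^sup>2 * (c - - c)\<^sup>2 / 8 = s\<^sup>2 * c\<^sup>2 / 2" by (simp add: power2_eq_square algebra_simps)
  finally show ?thesis .
qed

locale bounded_martingale_differences =
  fixes M :: "'a pmf" and D :: "nat \<Rightarrow> (nat \<Rightarrow> 'a) \<Rightarrow> real" and T :: nat and c :: real and d :: 'a
  assumes c_nonneg: "c \<ge> 0"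
  assumes dep: "\<And>k xs ys. k < T \<Longrightarrow> (\<And>j. j \<in> {1..Suc k} \<Longrightarrow> xs j = ys j) \<Longrightarrow> D k xs = D k ys"
  assumes bnd: "\<And>k xs. k < T \<Longrightarrow> (\<And>j. j \<in> {1..Suc k} \<Longrightarrow> xs j \<in> set_pmf M) \<Longrightarrow> \<bar>D k xs\<bar> \<le> c"
  assumes mean: "\<And>k xs. k < T \<Longrightarrow> (\<And>j. j \<in> {1..k} \<Longrightarrow> xs j \<in> set_pmf M) \<Longrightarrow>
      measure_pmf.expectation M (\<lambda>y. D k (xs(Suc k := y))) = 0"
begin

text \<open>One step of the Azuma-Hoeffding argument: conditionally on the first \<open>m\<close> coordinates,
  the next increment is centred and bounded, so Hoeffding's lemma applies to it.\<close>
lemma nn_integral_exp_sum_step_le: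
  assumes m: "Suc m \<le> T" and s: "s > 0" and f: "\<And>j. j \<in> {1..m} \<Longrightarrow> f j \<in> set_pmf M"
  shows "(\<integral>\<^sup>+y. ennreal (exp (s * (\<Sum>k<Suc m. D k (f(Suc m := y))))) \<partial>measure_pmf M)
         \<le> ennreal (exp (s * (\<Sum>k<m. D k f))) * ennreal (exp (s\<^sup>2 * c\<^sup>2 / 2))"
proof -
  have "D k (f(Suc m := y)) = D k f" if "k < m" for k y
    by (rule dep) (use that m in auto)
  then have "(\<integral>\<^sup>+y. ennreal (exp (s * (\<Sum>k<Suc m. D k (f(Suc m := y))))) \<partial>measure_pmf M)
      = (\<integral>\<^sup>+y. ennreal (exp (s * (\<Sum>k<m. D k f))) * ennreal (exp (s * D m (f(Suc m := y)))) \<partial>measure_pmf M)"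
    by (simp add: distrib_left exp_add ennreal_mult)
  also have "\<dots> = ennreal (exp (s * (\<Sum>k<m. D k f))) * (\<integral>\<^sup>+y. ennreal (exp (s * D m (f(Suc m := y)))) \<partial>measure_pmf M)"
    by (rule nn_integral_cmult) auto
  also have "\<dots> \<le> ennreal (exp (s * (\<Sum>k<m. D k f))) * ennreal (exp (s\<^sup>2 * c\<^sup>2 / 2))"
  proof (rule mult_left_mono)
    show "(\<integral>\<^sup>+y. ennreal (exp (s * D m (f(Suc m := y)))) \<partial>measure_pmf M) \<le> ennreal (exp (s\<^sup>2 * c\<^sup>2 / 2))"
    proof (rule nn_integral_exp_centered_le)
      show "\<bar>D m (f(Suc m := y))\<bar> \<le> c" if "y \<in> set_pmf M" for y
        by (rule bnd) (use m that f in auto)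
      show "measure_pmf.expectation M (\<lambda>y. D m (f(Suc m := y))) = 0"
        by (rule mean) (use m f in auto)
    qed (use s c_nonneg in auto)
  qed auto
  finally show ?thesis .
qed

lemma nn_integral_exp_sum_le:
  assumes "m \<le> T" "s > 0"
  shows "(\<integral>\<^sup>+xs. ennreal (exp (s * (\<Sum>k<m. D k xs))) \<partial>measure_pmf (Pi_pmf {1..m} d (\<lambda>_. M)))
          \<le> ennreal (exp (real m * (s\<^sup>2 * c\<^sup>2 / 2)))"
  using assms(1)
proof (induction m)
  case 0
  then show ?case by simp
next
  case (Suc m)
  have ins: "{1..Suc m} = insert (Suc m) {1..m}" by auto
  let ?P = "Pi_pmf {1..m} d (\<lambda>_. M)"
  have "(\<integral>\<^sup>+xs. ennreal (exp (s * (\<Sum>k<Suc m. D k xs))) \<partial>measure_pmf (Pi_pmf {1..Suc m} d (\<lambda>_. M)))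
     = (\<integral>\<^sup>+f. \<integral>\<^sup>+y. ennreal (exp (s * (\<Sum>k<Suc m. D k (f(Suc m := y))))) \<partial>measure_pmf M \<partial>measure_pmf ?P)"
    unfolding ins
    by (subst Pi_pmf_insert) (auto simp: nn_integral_pair_pmf' pair_commute_pmf[of M] case_prod_unfold)
  also have "\<dots> \<le> (\<integral>\<^sup>+f. ennreal (exp (s * (\<Sum>k<m. D k f))) * ennreal (exp (s\<^sup>2 * c\<^sup>2 / 2)) \<partial>measure_pmf ?P)"
  proof (intro nn_integral_mono_AE, unfold AE_measure_pmf_iff,
         intro ballI nn_integral_exp_sum_step_le[OF Suc.prems assms(2)])
    fix f j assume "f \<in> set_pmf ?P" "j \<in> {1..m}"
    then show "f j \<in> set_pmf M" by (auto simp: set_Pi_pmf PiE_dflt_def)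
  qed
  also have "\<dots> = (\<integral>\<^sup>+f. ennreal (exp (s * (\<Sum>k<m. D k f))) \<partial>measure_pmf ?P) * ennreal (exp (s\<^sup>2 * c\<^sup>2 / 2))"
    by (rule nn_integral_multc) auto
  also have "\<dots> \<le> ennreal (exp (real m * (s\<^sup>2 * c\<^sup>2 / 2))) * ennreal (exp (s\<^sup>2 * c\<^sup>2 / 2))"
    by (rule mult_right_mono) (use Suc in auto)
  also have "\<dots> = ennreal (exp (real (Suc m) * (s\<^sup>2 * c\<^sup>2 / 2)))"
    by (simp add: ennreal_mult[symmetric] exp_add[symmetric] algebra_simps)
  finally show ?case .
qed

lemma prob_sum_ge_le:
  assumes "a > 0" "c > 0" "T > 0"
  shows "measure_pmf.prob (Pi_pmf {1..T} d (\<lambda>_. M)) {xs. a \<le> (\<Sum>k<T. D k xs)} \<le> exp (- (a\<^sup>2) / (2 * real T * c\<^sup>2))"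
proof -
  define s where "s = a / (real T * c\<^sup>2)"
  have s: "s > 0" using assms by (simp add: s_def)
  let ?P = "Pi_pmf {1..T} d (\<lambda>_. M)"
  let ?S = "\<lambda>xs. (\<Sum>k<T. D k xs)"
  have "emeasure (measure_pmf ?P) {xs. a \<le> ?S xs} = (\<integral>\<^sup>+xs. indicator {xs. a \<le> ?S xs} xs \<partial>measure_pmf ?P)"
    by simp
  also have "\<dots> \<le> (\<integral>\<^sup>+xs. ennreal (exp (- s * a)) * ennreal (exp (s * ?S xs)) \<partial>measure_pmf ?P)"
  proof (rule nn_integral_mono)
    fix xs
    show "indicator {xs. a \<le> ?S xs} xs \<le> ennreal (exp (- s * a)) * ennreal (exp (s * ?S xs))"
    proof (cases "a \<le> ?S xs")
      case True
      have "1 \<le> exp (- s * a + s * ?S xs)" using True s by (simp add: algebra_simps mult_left_mono)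
      then show ?thesis using True by (simp add: ennreal_mult[symmetric] exp_add[symmetric])
    qed simp
  qed
  also have "\<dots> = ennreal (exp (- s * a)) * (\<integral>\<^sup>+xs. ennreal (exp (s * ?S xs)) \<partial>measure_pmf ?P)"
    by (rule nn_integral_cmult) auto
  also have "\<dots> \<le> ennreal (exp (- s * a)) * ennreal (exp (real T * (s\<^sup>2 * c\<^sup>2 / 2)))"
    by (rule mult_left_mono) (use nn_integral_exp_sum_le[OF _ s, of T] in auto)
  also have "\<dots> = ennreal (exp (- (a\<^sup>2) / (2 * real T * c\<^sup>2)))"
  proof -
    have "- s * a + real T * (s\<^sup>2 * c\<^sup>2 / 2) = - (a\<^sup>2) / (2 * real T * c\<^sup>2)"
      using assms by (simp add: s_def power2_eq_square field_simps)
    then show ?thesis by (simp add: ennreal_mult[symmetric] exp_add[symmetric])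
  qed
  finally show ?thesis
    by (simp add: measure_pmf.emeasure_eq_measure)
qed

end

lemma prob_ge_of_prob_exceptional_le:
  assumes "measure_pmf.prob P E \<le> \<delta>" and "\<And>x. x \<in> set_pmf P \<Longrightarrow> x \<notin> E \<Longrightarrow> x \<in> G"
  shows "1 - \<delta> \<le> measure_pmf.prob P G"
proof -
  have "1 - \<delta> \<le> measure_pmf.prob P (UNIV - E)"
    using assms(1) measure_pmf.prob_compl[of E P] by simp
  also have "\<dots> = measure_pmf.prob P ((UNIV - E) \<inter> set_pmf P)"
    by (simp add: measure_Int_set_pmf)
  also have "\<dots> \<le> measure_pmf.prob P G"
    by (rule measure_pmf.finite_measure_mono) (use assms(2) in auto)
  finally show ?thesis .
qed

section \<open>Elementary inequalities\<close>

lemma ln_one_minus_ge: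
  fixes x :: real assumes "\<bar>x\<bar> \<le> 1/2"
  shows "- x - 2 * x\<^sup>2 \<le> ln (1 - x)"
proof (cases "x \<ge> 0")
  case True then show ?thesis using ln_one_minus_pos_lower_bound[of x] assms by auto
next
  case False
  have "(-x) - (-x)\<^sup>2 \<le> ln (1 + (-x))" using ln_one_plus_pos_lower_bound[of "-x"] assms False by auto
  then have h: "- x - x\<^sup>2 \<le> ln (1 - x)" by simp
  have "x\<^sup>2 \<ge> 0" by simp
  with h show ?thesis by linarith
qed

lemma exp_ge_quadratic:
  fixes y :: real assumes "y \<ge> 0"
  shows "1 + y + y\<^sup>2 / 2 \<le> exp y"
proof -
  have "(\<lambda>t. exp t - 1 - t - t\<^sup>2/2) 0 \<le> (\<lambda>t. exp t - 1 - t - t\<^sup>2/2) y"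
  proof (rule DERIV_nonneg_imp_nondecreasing[OF assms])
    fix t :: real assume t: "0 \<le> t" "t \<le> y"
    show "\<exists>d. ((\<lambda>t. exp t - 1 - t - t\<^sup>2/2) has_real_derivative d) (at t) \<and> d \<ge> 0"
    proof (intro exI conjI)
      show "((\<lambda>t. exp t - 1 - t - t\<^sup>2/2) has_real_derivative (exp t - 1 - t)) (at t)"
        by (auto intro!: derivative_eq_intros)
      have "1 + t \<le> exp t" by (rule exp_ge_add_one_self)
      then show "exp t - 1 - t \<ge> 0" by linarith
    qed
  qed
  then show ?thesis by simp
qed

lemma exp_minus_ge_aux:
  fixes x :: real assumes "x \<ge> 0"
  shows "2 - x\<^sup>2 \<le> 2 * (1 + x) * exp (- x)"
proof -
  have "(\<lambda>t. 2 * (1 + t) * exp (- t) - 2 + t\<^sup>2) 0 \<le> (\<lambda>t. 2 * (1 + t) * exp (- t) - 2 + t\<^sup>2) x"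
  proof (rule DERIV_nonneg_imp_nondecreasing[OF assms])
    fix t :: real assume t: "0 \<le> t" "t \<le> x"
    have "exp (-t) \<le> 1" using t by simp
    then have "0 \<le> 2 * t * (1 - exp (-t))" using t by simp
    then show "\<exists>d. ((\<lambda>t. 2 * (1 + t) * exp (- t) - 2 + t\<^sup>2) has_real_derivative d) (at t) \<and> d \<ge> 0"
      by (intro exI[of _ "2 * t * (1 - exp (-t))"] conjI)
         (auto intro!: derivative_eq_intros simp: algebra_simps)
  qed
  then show ?thesis by simp
qed

lemma exp_minus_sub_linear_ge:
  fixes x :: real
  shows "x\<^sup>2 / (2 * (1 + \<bar>x\<bar>)) \<le> exp (- x) - 1 + x"
proof (cases "x \<ge> 0")
  case True
  have "x\<^sup>2 / (2 * (1 + x)) = (2 - x\<^sup>2) / (2 * (1 + x)) - 1 + x"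
    using True by (simp add: field_simps power2_eq_square)
  also have "(2 - x\<^sup>2) / (2 * (1 + x)) \<le> exp (- x)"
    using exp_minus_ge_aux[OF True] True by (simp add: divide_le_eq mult.commute)
  finally show ?thesis using True by simp
next
  case False
  have "1 + (-x) + (-x)\<^sup>2 / 2 \<le> exp (-x)" using exp_ge_quadratic[of "-x"] False by simp
  then have a: "x\<^sup>2 / 2 \<le> exp (-x) - 1 + x" by simp
  have b: "x\<^sup>2 / (2 * (1 + \<bar>x\<bar>)) \<le> x\<^sup>2 / 2"
    by (rule divide_left_mono) auto
  from a b show ?thesis by linarith
qed

text \<open>For \<open>u \<ge> 0\<close> use convexity of \<open>exp\<close> between \<open>0\<close> and \<open>y/(1 - p)\<close>; for \<open>u < 0\<close> the
  quotient lies in \<open>[- y/(1 - p), 1]\<close>.\<close>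
lemma abs_missing_correction_le:
  fixes p q u y :: real
  assumes p: "0 \<le> p" "p < 1" and q: "0 < q" "q \<le> 1 - p" and u: "\<bar>u\<bar> \<le> y"
  shows "\<bar>(exp u - p) / (1 - p)\<bar> \<le> exp (y / q)"
proof -
  have y0: "y \<ge> 0" using u by linarith
  have yq: "y / (1 - p) \<le> y / q" using q y0 by (intro divide_left_mono) auto
  have e1: "1 \<le> exp (y / q)" using y0 q by simp
  have lin: "y / q \<le> exp (y / q)" using exp_ge_add_one_self[of "y/q"] by linarith
  show ?thesis
  proof (cases "u \<ge> 0")
    case True
    have conv: "exp ((1 - p) * (y / (1 - p)) + p * 0) \<le> (1 - p) * exp (y / (1 - p)) + p * exp 0"
      using convex_onD[OF exp_convex, of p "y/(1-p)" 0] p by simp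
    have "exp u \<le> exp y" using u by simp
    also have "exp y \<le> (1 - p) * exp (y / (1 - p)) + p" using conv p by simp
    finally have "(exp u - p) / (1 - p) \<le> exp (y / (1 - p))" using p by (simp add: divide_le_eq mult.commute)
    also have "\<dots> \<le> exp (y / q)" using yq by simp
    finally have up: "(exp u - p) / (1 - p) \<le> exp (y / q)" .
    have "exp u \<ge> 1" using True by simp
    then have "(exp u - p) / (1 - p) \<ge> 0" using p by (intro divide_nonneg_pos) linarith+
    then show ?thesis using up by (metis abs_of_nonneg)
  next
    case False
    have eu: "exp u \<le> 1" using False by simp
    have l1: "1 + u \<le> exp u" by simp
    show ?thesis
    proof (cases "exp u \<ge> p")
      case True
      then have "\<bar>(exp u - p) / (1 - p)\<bar> = (exp u - p) / (1 - p)" using p by simp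
      also have "\<dots> \<le> 1" using eu p by (simp add: divide_le_eq)
      finally show ?thesis using e1 by linarith
    next
      case False
      then have "\<bar>(exp u - p) / (1 - p)\<bar> = (p - exp u) / (1 - p)" using p by (simp add: abs_div)
      also have "\<dots> \<le> y / (1 - p)"
      proof (rule divide_right_mono)
        show "p - exp u \<le> y" using l1 u p by linarith
      qed (use p in auto)
      finally show ?thesis using yq lin by linarith
    qed
  qed
qed

lemma abs_div_one_minus_le:
  fixes x p q :: real
  assumes "\<bar>x\<bar> \<le> 1" "p < 1" "0 < q" "q \<le> 1 - p"
  shows "\<bar>x / (1 - p)\<bar> \<le> 1 / q"
proof -
  have "\<bar>x / (1 - p)\<bar> \<le> 1 / (1 - p)" using assms by (simp add: abs_div divide_right_mono)
  also have "\<dots> \<le> 1 / q" using assms by (intro divide_left_mono) auto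
  finally show ?thesis .
qed

lemma abs_prod_missing_correction_le:
  fixes p u y :: "nat \<Rightarrow> real"
  assumes "finite J" "\<And>j. j \<in> J \<Longrightarrow> 0 \<le> p j \<and> p j < 1 \<and> q \<le> 1 - p j" "0 < q" "\<And>j. \<bar>u j\<bar> \<le> y j"
  shows "\<bar>\<Prod>j\<in>J. (exp (u j) - p j) / (1 - p j)\<bar> \<le> exp (\<Sum>j\<in>J. y j / q)"
proof -
  have "\<bar>\<Prod>j\<in>J. (exp (u j) - p j) / (1 - p j)\<bar> = (\<Prod>j\<in>J. \<bar>(exp (u j) - p j) / (1 - p j)\<bar>)"
    by (simp add: abs_prod)
  also have "\<dots> \<le> (\<Prod>j\<in>J. exp (y j / q))"
  proof (rule prod_mono)
    fix j assume "j \<in> J"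
    then show "0 \<le> \<bar>(exp (u j) - p j) / (1 - p j)\<bar> \<and> \<bar>(exp (u j) - p j) / (1 - p j)\<bar> \<le> exp (y j / q)"
      using abs_missing_correction_le[of "p j" q "u j" "y j"] assms by auto
  qed
  also have "\<dots> = exp (\<Sum>j\<in>J. y j / q)" using assms(1) by (simp add: exp_sum)
  finally show ?thesis .
qed

lemma mult_one_plus_double_le_exp:
  fixes l :: real assumes "l \<ge> 0"
  shows "l * (1 + 2 * l) \<le> 2 * exp (2 * l)"
proof -
  have "(1 + l)\<^sup>2 \<le> (exp l)\<^sup>2" using exp_ge_add_one_self[of l] assms by (intro power_mono) auto
  also have "(exp l)\<^sup>2 = exp (2 * l)" by (simp add: power2_eq_square exp_add[symmetric])
  finally have "(1+l)\<^sup>2 \<le> exp (2*l)" .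
  moreover have "l * (1 + 2 * l) \<le> 2 * (1 + l)\<^sup>2" using assms by (simp add: power2_eq_square algebra_simps)
  ultimately show ?thesis by linarith
qed


lemma exp_tangent_le: "exp a * (1 + (b - a)) \<le> exp (b::real)"
proof -
  have "exp a * (1 + (b - a)) \<le> exp a * exp (b - a)"
    by (intro mult_left_mono) auto
  also have "\<dots> = exp b" by (simp add: exp_diff)
  finally show ?thesis .
qed

section \<open>The Ising model\<close>

definition ising_partition :: "nat \<Rightarrow> (nat \<Rightarrow> nat \<Rightarrow> real) \<Rightarrow> real" where
  "ising_partition n A = (\<Sum>y\<in>ising_configs n. exp (ising_energy n A y))"

lemma ising_configs_PiE_dflt: "ising_configs n = PiE_dflt {1..n} 0 (\<lambda>_. {-1,1})"
  by (auto simp: ising_configs_def PiE_dflt_def)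

lemma finite_ising_configs [simp]: "finite (ising_configs n)"
  unfolding ising_configs_PiE_dflt by (intro finite_PiE_dflt) auto

lemma ising_config_one: "(\<lambda>i. if i \<in> {1..n} then 1 else 0) \<in> ising_configs n"
  by (auto simp: ising_configs_def)

lemma ising_configs_nonempty [simp]: "ising_configs n \<noteq> {}"
  using ising_config_one by blast

lemma ising_partition_pos: "ising_partition n A > 0"
  unfolding ising_partition_def by (intro sum_pos) auto

lemma pmf_ising_pmf: "pmf (ising_pmf n A) z = (if z \<in> ising_configs n then exp (ising_energy n A z) / ising_partition n A else 0)"
proof -
  let ?f = "\<lambda>z. if z \<in> ising_configs n then exp (ising_energy n A z) / ising_partition n A else 0"
  have "(\<integral>\<^sup>+x. ennreal (?f x) \<partial>count_space UNIV) = (\<integral>\<^sup>+x. ennreal (exp (ising_energy n A x) / ising_partition n A) * indicator (ising_configs n) x \<partial>count_space UNIV)"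
    by (intro nn_integral_cong) (auto simp: indicator_def)
  also have "\<dots> = (\<integral>\<^sup>+x. ennreal (exp (ising_energy n A x) / ising_partition n A) \<partial>count_space (ising_configs n))"
    by (simp add: nn_integral_count_space_indicator)
  also have "\<dots> = (\<Sum>x\<in>ising_configs n. ennreal (exp (ising_energy n A x) / ising_partition n A))"
    using ising_partition_pos[of n A] by (simp add: nn_integral_count_space_finite less_imp_le)
  also have "\<dots> = ennreal (\<Sum>x\<in>ising_configs n. exp (ising_energy n A x) / ising_partition n A)"
    using ising_partition_pos[of n A] by (intro sum_ennreal) (simp add: less_imp_le)
  also have "(\<Sum>x\<in>ising_configs n. exp (ising_energy n A x) / ising_partition n A) = 1"
    using ising_partition_pos[of n A] by (simp add: sum_divide_distrib[symmetric] ising_partition_def)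
  finally have one: "(\<integral>\<^sup>+x. ennreal (?f x) \<partial>count_space UNIV) = 1" by simp
  have nn: "\<And>x. 0 \<le> ?f x" using ising_partition_pos[of n A] by (simp add: less_imp_le)
  show ?thesis
    unfolding ising_pmf_def ising_partition_def[symmetric] by (rule pmf_embed_pmf[OF nn one])
qed

lemma set_pmf_ising_pmf: "set_pmf (ising_pmf n A) \<subseteq> ising_configs n"
  by (auto simp: set_pmf_eq pmf_ising_pmf split: if_splits)

lemma sum_pmf_ising_pmf: "(\<Sum>z\<in>ising_configs n. pmf (ising_pmf n A) z) = 1"
  using ising_partition_pos[of n A] by (simp add: pmf_ising_pmf sum_divide_distrib[symmetric] ising_partition_def)

definition flip :: "nat \<Rightarrow> (nat \<Rightarrow> real) \<Rightarrow> (nat \<Rightarrow> real)" where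
  "flip k z = z(k := - z k)"

lemma flip_flip [simp]: "flip k (flip k z) = z"
  by (auto simp: flip_def)

lemma flip_in_ising_configs: "k \<in> {1..n} \<Longrightarrow> z \<in> ising_configs n \<Longrightarrow> flip k z \<in> ising_configs n"
  by (auto simp: ising_configs_def flip_def)

lemma bij_betw_flip: "k \<in> {1..n} \<Longrightarrow> bij_betw (flip k) (ising_configs n) (ising_configs n)"
  by (rule bij_betwI[where g = "flip k"]) (auto intro: flip_in_ising_configs)

lemma sum_reindex_flip: "k \<in> {1..n} \<Longrightarrow> (\<Sum>z\<in>ising_configs n. f (flip k z)) = (\<Sum>z\<in>ising_configs n. f z)"
  by (rule sum.reindex_bij_betw[OF bij_betw_flip])

lemma ising_config_values: "z \<in> ising_configs n \<Longrightarrow> i \<in> {1..n} \<Longrightarrow> z i = -1 \<or> z i = 1"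
  unfolding ising_configs_def by blast

lemma ising_config_sq: "z \<in> ising_configs n \<Longrightarrow> i \<in> {1..n} \<Longrightarrow> z i * z i = 1"
  using ising_config_values[of z n i] by auto

lemma abs_ising_config_le:
  assumes "z \<in> ising_configs n" shows "\<bar>z i\<bar> \<le> 1"
proof (cases "i \<in> {1..n}")
  case True then show ?thesis using ising_config_values[OF assms True] by auto
next
  case False then show ?thesis using assms by (auto simp: ising_configs_def)
qed

lemma sum_mult_fun_upd:
  fixes c z :: "nat \<Rightarrow> real"
  assumes "finite J" "i \<in> J"
  shows "(\<Sum>j\<in>J. c j * (z(i := v)) j) = (\<Sum>j\<in>J. c j * z j) + c i * (v - z i)"
proof -
  have "(\<Sum>j\<in>J. c j * (z(i := v)) j) = c i * v + (\<Sum>j\<in>J - {i}. c j * (z(i := v)) j)"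
    using assms by (subst sum.remove[of _ i]) auto
  also have "(\<Sum>j\<in>J - {i}. c j * (z(i := v)) j) = (\<Sum>j\<in>J - {i}. c j * z j)"
    by (intro sum.cong) auto
  also have "c i * v + \<dots> = (\<Sum>j\<in>J. c j * z j) + c i * (v - z i)"
  proof -
    have "c i * (v - z i) = c i * v - c i * z i" by (simp add: right_diff_distrib)
    moreover have "(\<Sum>j\<in>J. c j * z j) = c i * z i + (\<Sum>j\<in>J - {i}. c j * z j)"
      using assms by (subst sum.remove[of _ i]) auto
    ultimately show ?thesis by linarith
  qed
  finally show ?thesis .
qed

lemma ising_energy_row_flip_diff:
  assumes k: "k \<in> {1..n}"
  shows "(\<Sum>j\<in>{i<..n}. A i j * z i * z j) - (\<Sum>j\<in>{i<..n}. A i j * flip k z i * flip k z j)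
       = (if i = k then 2 * z k * (\<Sum>j\<in>{k<..n}. A k j * z j) else if i < k then 2 * A i k * z i * z k else 0)"
proof -
  have "(\<Sum>j\<in>{i<..n}. A i j * z i * z j) - (\<Sum>j\<in>{i<..n}. A i j * flip k z i * flip k z j)
      = (\<Sum>j\<in>{i<..n}. A i j * z i * z j - A i j * flip k z i * flip k z j)"
    by (simp add: sum_subtractf)
  also have "\<dots> = (if i = k then 2 * z k * (\<Sum>j\<in>{k<..n}. A k j * z j) else if i < k then 2 * A i k * z i * z k else 0)"
  proof (cases "i = k")
    case True
    then show ?thesis by (simp add: flip_def sum_distrib_left algebra_simps)
  next
    case False
    have "(\<Sum>j\<in>{i<..n}. A i j * z i * z j - A i j * flip k z i * flip k z j)
        = (\<Sum>j\<in>{i<..n}. if k = j then 2 * A i k * z i * z k else 0)"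
      using False by (intro sum.cong) (auto simp: flip_def)
    also have "\<dots> = (if i < k then 2 * A i k * z i * z k else 0)"
      using k False by (subst sum.delta') auto
    finally show ?thesis using False by simp
  qed
  finally show ?thesis .
qed

lemma ising_energy_flip:
  assumes k: "k \<in> {1..n}" and sym: "\<forall>i\<in>{1..n}. \<forall>j\<in>{1..n}. A i j = A j i"
  shows "ising_energy n A z - ising_energy n A (flip k z) = 2 * z k * (\<Sum>j\<in>{1..n} - {k}. A k j * z j)"
proof -
  let ?y = "flip k z"
  note inner = ising_energy_row_flip_diff[OF k, where A = A and z = z]
  have "ising_energy n A z - ising_energy n A ?y = (\<Sum>i\<in>{1..n}. (\<Sum>j\<in>{i<..n}. A i j * z i * z j) - (\<Sum>j\<in>{i<..n}. A i j * ?y i * ?y j))"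
    unfolding ising_energy_def by (simp add: sum_subtractf)
  also have "\<dots> = (\<Sum>i\<in>{1..n}. (if i = k then 2 * z k * (\<Sum>j\<in>{k<..n}. A k j * z j) else if i < k then 2 * A i k * z i * z k else 0))"
    by (intro sum.cong) (use inner in auto)
  also have "\<dots> = 2 * z k * (\<Sum>j\<in>{k<..n}. A k j * z j) + (\<Sum>i\<in>{1..n} - {k}. (if i < k then 2 * A i k * z i * z k else 0))"
    using k by (subst sum.remove[of _ k]) (auto intro!: sum.cong)
  also have "(\<Sum>i\<in>{1..n} - {k}. (if i < k then 2 * A i k * z i * z k else 0)) = (\<Sum>i\<in>{1..<k}. 2 * A i k * z i * z k)"
  proof -
    have "(\<Sum>i\<in>{1..n} - {k}. (if i < k then 2 * A i k * z i * z k else 0)) = (\<Sum>i\<in>{i\<in>{1..n} - {k}. i < k}. 2 * A i k * z i * z k)"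
      by (rule sum.inter_filter[symmetric]) simp
    also have "{i\<in>{1..n} - {k}. i < k} = {1..<k}" using k by auto
    finally show ?thesis .
  qed
  also have "(\<Sum>i\<in>{1..<k}. 2 * A i k * z i * z k) = 2 * z k * (\<Sum>j\<in>{1..<k}. A k j * z j)"
    using sym k by (simp add: sum_distrib_left algebra_simps)
  also have "2 * z k * (\<Sum>j\<in>{k<..n}. A k j * z j) + 2 * z k * (\<Sum>j\<in>{1..<k}. A k j * z j)
       = 2 * z k * (\<Sum>j\<in>{1..n} - {k}. A k j * z j)"
  proof -
    have "{1..n} - {k} = {1..<k} \<union> {k<..n}" using k by auto
    then have "(\<Sum>j\<in>{1..n} - {k}. A k j * z j) = (\<Sum>j\<in>{1..<k} \<union> {k<..n}. A k j * z j)"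
      by simp
    also have "\<dots> = (\<Sum>j\<in>{1..<k}. A k j * z j) + (\<Sum>j\<in>{k<..n}. A k j * z j)"
      by (rule sum.union_disjoint) auto
    finally have "(\<Sum>j\<in>{1..n} - {k}. A k j * z j) = (\<Sum>j\<in>{1..<k}. A k j * z j) + (\<Sum>j\<in>{k<..n}. A k j * z j)" .
    then show ?thesis by (simp add: algebra_simps)
  qed
  finally show ?thesis .
qed


section \<open>The screening loss\<close>

definition local_field :: "nat \<Rightarrow> (nat \<Rightarrow> real) \<Rightarrow> (nat \<Rightarrow> real) \<Rightarrow> real" where
  "local_field n \<theta> z = (\<Sum>j\<in>{1..n-1}. \<theta> j * z j)"

definition screening_loss :: "nat \<Rightarrow> (nat \<Rightarrow> nat \<Rightarrow> real) \<Rightarrow> (nat \<Rightarrow> real) \<Rightarrow> real" where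
  "screening_loss n A \<theta> = (\<Sum>z\<in>ising_configs n. pmf (ising_pmf n A) z * exp (- z n * local_field n \<theta> z))"

definition screening_grad :: "nat \<Rightarrow> (nat \<Rightarrow> nat \<Rightarrow> real) \<Rightarrow> (nat \<Rightarrow> real) \<Rightarrow> nat \<Rightarrow> real" where
  "screening_grad n A \<theta> i = (\<Sum>z\<in>ising_configs n. pmf (ising_pmf n A) z * (- z n * z i * exp (- z n * local_field n \<theta> z)))"

lemma sum_flip_odd_eq_0:
  fixes G :: "(nat \<Rightarrow> real) \<Rightarrow> real"
  assumes k: "k \<in> {1..n}" and anti: "\<And>z. z \<in> ising_configs n \<Longrightarrow> G (flip k z) = - G z"
  shows "(\<Sum>z\<in>ising_configs n. G z) = 0"
proof -
  have "(\<Sum>z\<in>ising_configs n. G z) = (\<Sum>z\<in>ising_configs n. G (flip k z))"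
    by (rule sum_reindex_flip[OF k, symmetric])
  also have "\<dots> = - (\<Sum>z\<in>ising_configs n. G z)"
    by (simp add: anti sum_negf)
  finally show ?thesis by simp
qed

lemma local_field_flip_other: "k \<notin> {1..n-1} \<Longrightarrow> local_field n \<theta> (flip k z) = local_field n \<theta> z"
  unfolding local_field_def flip_def by (intro sum.cong) auto

lemma local_field_flip: "k \<in> {1..n-1} \<Longrightarrow> local_field n \<theta> (flip k z) = local_field n \<theta> z - 2 * \<theta> k * z k"
  unfolding local_field_def flip_def by (subst sum_mult_fun_upd) auto

lemma ising_energy_flip_last:
  assumes n: "n \<ge> 2" and sym: "\<forall>i\<in>{1..n}. \<forall>j\<in>{1..n}. A i j = A j i"
  shows "ising_energy n A (flip n z) = ising_energy n A z - 2 * z n * local_field n (\<lambda>j. A n j) z"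
proof -
  have "{1..n} - {n} = {1..n-1}" using n by auto
  then show ?thesis using ising_energy_flip[of n n A z] n sym by (simp add: local_field_def)
qed

text \<open>Flipping \<open>z\<^sub>n\<close> multiplies the Ising weight by \<open>exp (- 2 z\<^sub>n h(z))\<close>, which turns
  \<open>exp (z\<^sub>n h(z))\<close> back into \<open>exp (- z\<^sub>n h(z))\<close>; as the prefactor \<open>z\<^sub>n\<close> changes sign, each
  summand is odd under the flip.\<close>
lemma screening_grad_at_truth:
  assumes n: "n \<ge> 2" and sym: "\<forall>i\<in>{1..n}. \<forall>j\<in>{1..n}. A i j = A j i" and i: "i \<in> {1..n-1}"
  shows "screening_grad n A (\<lambda>j. A n j) i = 0"
proof -
  let ?h = "local_field n (\<lambda>j. A n j)"
  let ?G = "\<lambda>z. pmf (ising_pmf n A) z * (- z n * z i * exp (- z n * ?h z))"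
  have nn: "n \<in> {1..n}" using n by auto
  have "(\<Sum>z\<in>ising_configs n. ?G z) = 0"
  proof (rule sum_flip_odd_eq_0[OF nn])
    fix z assume z: "z \<in> ising_configs n"
    have fz: "flip n z \<in> ising_configs n" by (rule flip_in_ising_configs[OF nn z])
    have hf: "?h (flip n z) = ?h z" by (rule local_field_flip_other) auto
    have fn: "flip n z n = - z n" and fi: "flip n z i = z i" using i n by (auto simp: flip_def)
    have "?G (flip n z) = exp (ising_energy n A z - 2 * z n * ?h z) / ising_partition n A * (z n * z i * exp (z n * ?h z))"
      using fz z by (simp add: pmf_ising_pmf ising_energy_flip_last[OF n sym] hf fn fi)
    also have "exp (ising_energy n A z - 2 * z n * ?h z) * exp (z n * ?h z) = exp (ising_energy n A z) * exp (- z n * ?h z)"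
      by (simp add: exp_add[symmetric])
    then have "exp (ising_energy n A z - 2 * z n * ?h z) / ising_partition n A * (z n * z i * exp (z n * ?h z))
        = exp (ising_energy n A z) / ising_partition n A * (z n * z i * exp (- z n * ?h z))"
      by (simp add: field_simps)
    finally show "?G (flip n z) = - ?G z" using z by (simp add: pmf_ising_pmf)
  qed
  then show ?thesis unfolding screening_grad_def .
qed

lemma flip_pairing_lower_bound:
  fixes \<nu> g :: "(nat \<Rightarrow> real) \<Rightarrow> real"
  assumes k: "k \<in> {1..n}" and r: "0 \<le> r" "r \<le> 1" and D: "D \<ge> 0"
    and nu0: "\<And>z. z \<in> ising_configs n \<Longrightarrow> \<nu> z \<ge> 0"
    and ratio: "\<And>z. z \<in> ising_configs n \<Longrightarrow> \<nu> (flip k z) \<ge> r * \<nu> z"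
    and gap: "\<And>z. z \<in> ising_configs n \<Longrightarrow> (g z)\<^sup>2 + (g (flip k z))\<^sup>2 \<ge> 2 * D"
  shows "r * D * (\<Sum>z\<in>ising_configs n. \<nu> z) \<le> (\<Sum>z\<in>ising_configs n. \<nu> z * (g z)\<^sup>2)"
proof -
  let ?C = "ising_configs n"
  have "2 * (\<Sum>z\<in>?C. \<nu> z * (g z)\<^sup>2) = (\<Sum>z\<in>?C. \<nu> z * (g z)\<^sup>2) + (\<Sum>z\<in>?C. \<nu> (flip k z) * (g (flip k z))\<^sup>2)"
    using sum_reindex_flip[OF k, of "\<lambda>z. \<nu> z * (g z)\<^sup>2"] by simp
  also have "\<dots> = (\<Sum>z\<in>?C. \<nu> z * (g z)\<^sup>2 + \<nu> (flip k z) * (g (flip k z))\<^sup>2)"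
    by (simp add: sum.distrib)
  also have "\<dots> \<ge> (\<Sum>z\<in>?C. 2 * (r * D) * \<nu> z)"
  proof (rule sum_mono)
    fix z assume z: "z \<in> ?C"
    have a: "r * \<nu> z * (g z)\<^sup>2 \<le> \<nu> z * (g z)\<^sup>2"
      using r nu0[OF z] mult_left_le_one_le[of "\<nu> z" r] by (intro mult_right_mono) auto
    have b: "r * \<nu> z * (g (flip k z))\<^sup>2 \<le> \<nu> (flip k z) * (g (flip k z))\<^sup>2"
      using ratio[OF z] by (intro mult_right_mono) auto
    have c: "r * \<nu> z * (2 * D) \<le> r * \<nu> z * ((g z)\<^sup>2 + (g (flip k z))\<^sup>2)"
      using gap[OF z] r nu0[OF z] by (intro mult_left_mono) auto
    show "2 * (r * D) * \<nu> z \<le> \<nu> z * (g z)\<^sup>2 + \<nu> (flip k z) * (g (flip k z))\<^sup>2"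
      using a b c by (simp add: algebra_simps)
  qed
  finally have "(\<Sum>z\<in>?C. 2 * (r * D) * \<nu> z) \<le> 2 * (\<Sum>z\<in>?C. \<nu> z * (g z)\<^sup>2)" .
  moreover have "(\<Sum>z\<in>?C. 2 * (r * D) * \<nu> z) = 2 * (r * D * (\<Sum>z\<in>?C. \<nu> z))"
    by (simp add: sum_distrib_left algebra_simps)
  ultimately show ?thesis by linarith
qed

lemma local_field_add: "local_field n (\<lambda>j. a j + b j) z = local_field n a z + local_field n b z"
  unfolding local_field_def by (simp add: sum.distrib algebra_simps)

lemma abs_local_field_le:
  assumes "z \<in> ising_configs n"
  shows "\<bar>local_field n a z\<bar> \<le> (\<Sum>j\<in>{1..n-1}. \<bar>a j\<bar>)"
proof -
  have "\<bar>local_field n a z\<bar> \<le> (\<Sum>j\<in>{1..n-1}. \<bar>a j * z j\<bar>)" unfolding local_field_def by (rule sum_abs)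
  also have "\<dots> \<le> (\<Sum>j\<in>{1..n-1}. \<bar>a j\<bar>)"
    by (intro sum_mono) (use abs_ising_config_le[OF assms] in \<open>auto simp: abs_mult intro: mult_left_le\<close>)
  finally show ?thesis .
qed

lemma sum_abs_last_row_le:
  fixes A :: "nat \<Rightarrow> nat \<Rightarrow> real"
  assumes "n \<ge> 1" and "\<forall>i\<in>{1..n}. (\<Sum>j\<in>{1..n}. \<bar>A i j\<bar>) \<le> lam"
  shows "(\<Sum>j\<in>{1..n-1}. \<bar>A n j\<bar>) \<le> lam"
proof -
  have "(\<Sum>j\<in>{1..n-1}. \<bar>A n j\<bar>) \<le> (\<Sum>j\<in>{1..n}. \<bar>A n j\<bar>)" by (rule sum_mono2) auto
  also have "\<dots> \<le> lam" using assms by simp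
  finally show ?thesis .
qed

definition tilted_weight :: "nat \<Rightarrow> (nat \<Rightarrow> nat \<Rightarrow> real) \<Rightarrow> (nat \<Rightarrow> real) \<Rightarrow> real" where
  "tilted_weight n A z = pmf (ising_pmf n A) z * exp (- z n * local_field n (A n) z)"

text \<open>The linear term of the expansion around \<open>A\<^sub>n\<close> vanishes because \<open>A\<^sub>n\<close> is a stationary point.\<close>
lemma screening_loss_excess_eq:
  fixes \<theta> :: "nat \<Rightarrow> real"
  assumes n: "n \<ge> 2" and sym: "\<forall>i\<in>{1..n}. \<forall>j\<in>{1..n}. A i j = A j i"
  defines "x \<equiv> \<lambda>z. z n * local_field n (\<lambda>j. \<theta> j - A n j) z"
  shows "screening_loss n A \<theta> - screening_loss n A (A n)
         = (\<Sum>z\<in>ising_configs n. tilted_weight n A z * (exp (- x z) - 1 + x z))"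
proof -
  let ?C = "ising_configs n" and ?\<nu> = "tilted_weight n A"
  have split: "z n * local_field n \<theta> z = z n * local_field n (A n) z + x z" for z
  proof -
    have "\<theta> = (\<lambda>j. A n j + (\<theta> j - A n j))" by simp
    then have "local_field n \<theta> z = local_field n (A n) z + local_field n (\<lambda>j. \<theta> j - A n j) z"
      by (metis local_field_add)
    then show ?thesis unfolding x_def by (simp add: algebra_simps)
  qed
  have "(\<Sum>z\<in>?C. ?\<nu> z * x z)
      = (\<Sum>j\<in>{1..n-1}. (\<theta> j - A n j) * (- screening_grad n A (A n) j))"
    unfolding x_def tilted_weight_def local_field_def screening_grad_def
    by (simp add: sum_distrib_left sum_distrib_right sum_negf[symmetric] algebra_simps sum.swap[of _ ?C])
  also have "\<dots> = 0"
    using screening_grad_at_truth[OF n sym] by (intro sum.neutral) auto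
  finally have lin0: "(\<Sum>z\<in>?C. ?\<nu> z * x z) = 0" .
  have "screening_loss n A \<theta> - screening_loss n A (A n) = (\<Sum>z\<in>?C. ?\<nu> z * (exp (- x z) - 1))"
    unfolding screening_loss_def tilted_weight_def
    by (simp add: sum_subtractf[symmetric] split exp_add[symmetric] algebra_simps)
  also have "\<dots> = (\<Sum>z\<in>?C. ?\<nu> z * (exp (- x z) - 1 + x z)) - (\<Sum>z\<in>?C. ?\<nu> z * x z)"
    by (simp add: sum_subtractf[symmetric] algebra_simps)
  finally show ?thesis using lin0 by simp
qed

lemma tilted_energy_flip_ge:
  assumes n: "n \<ge> 2" and sym: "\<forall>i\<in>{1..n}. \<forall>j\<in>{1..n}. A i j = A j i"
    and rows: "\<forall>i\<in>{1..n}. (\<Sum>j\<in>{1..n}. \<bar>A i j\<bar>) \<le> lam"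
    and i: "i \<in> {1..n-1}" and z: "z \<in> ising_configs n"
  shows "ising_energy n A z - z n * local_field n (A n) z - 2 * lam
         \<le> ising_energy n A (flip i z) - flip i z n * local_field n (A n) (flip i z)"
proof -
  have iin: "i \<in> {1..n}" "i \<noteq> n" and nin: "n \<in> {1..n}" using i n by auto
  define s where "s = (\<Sum>j\<in>{1..n} - {i} - {n}. A i j * z j)"
  have "(\<Sum>j\<in>{1..n} - {i}. A i j * z j) = A n i * z n + s"
    unfolding s_def using iin nin sym by (subst sum.remove[of _ n]) auto
  moreover have "flip i z n = z n" using iin by (simp add: flip_def)
  ultimately have expo: "ising_energy n A (flip i z) - flip i z n * local_field n (A n) (flip i z)
      = ising_energy n A z - z n * local_field n (A n) z - 2 * z i * s"
    using ising_energy_flip[OF iin(1) sym, of z] unfolding local_field_flip[OF i] by (simp add: algebra_simps)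
  have "\<bar>s\<bar> \<le> (\<Sum>j\<in>{1..n} - {i} - {n}. \<bar>A i j\<bar>)"
    unfolding s_def using abs_ising_config_le[OF z]
    by (intro order_trans[OF sum_abs] sum_mono) (auto simp: abs_mult intro: mult_left_le)
  also have "\<dots> \<le> (\<Sum>j\<in>{1..n}. \<bar>A i j\<bar>)" by (rule sum_mono2) auto
  also have "\<dots> \<le> lam" using rows iin by auto
  finally have "\<bar>z i * s\<bar> \<le> lam"
    using abs_ising_config_le[OF z, of i] by (simp add: abs_mult mult_le_one order_trans[OF mult_left_le_one_le])
  then show ?thesis unfolding expo by linarith
qed

lemma tilted_weight_flip_ge:
  assumes n: "n \<ge> 2" and sym: "\<forall>i\<in>{1..n}. \<forall>j\<in>{1..n}. A i j = A j i"
    and rows: "\<forall>i\<in>{1..n}. (\<Sum>j\<in>{1..n}. \<bar>A i j\<bar>) \<le> lam"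
    and i: "i \<in> {1..n-1}" and z: "z \<in> ising_configs n"
  shows "exp (- 2 * lam) * tilted_weight n A z \<le> tilted_weight n A (flip i z)"
proof -
  have fz: "flip i z \<in> ising_configs n" by (rule flip_in_ising_configs) (use i z in auto)
  have "exp (- 2 * lam) * tilted_weight n A z
      = exp (ising_energy n A z - z n * local_field n (A n) z - 2 * lam) / ising_partition n A"
    unfolding tilted_weight_def using z by (simp add: pmf_ising_pmf exp_diff exp_minus exp_add field_simps)
  also have "\<dots> \<le> exp (ising_energy n A (flip i z) - flip i z n * local_field n (A n) (flip i z)) / ising_partition n A"
    using tilted_energy_flip_ge[OF n sym rows i z] ising_partition_pos[of n A] by (intro divide_right_mono) auto
  also have "\<dots> = tilted_weight n A (flip i z)"
    unfolding tilted_weight_def using fz by (simp add: pmf_ising_pmf exp_diff exp_minus field_simps)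
  finally show ?thesis .
qed

lemma sum_tilted_weight_ge:
  assumes "(\<Sum>j\<in>{1..n-1}. \<bar>A n j\<bar>) \<le> lam"
  shows "exp (- lam) \<le> (\<Sum>z\<in>ising_configs n. tilted_weight n A z)"
proof -
  have "(\<Sum>z\<in>ising_configs n. pmf (ising_pmf n A) z * exp (- lam)) \<le> (\<Sum>z\<in>ising_configs n. tilted_weight n A z)"
  proof (rule sum_mono)
    fix z assume z: "z \<in> ising_configs n"
    have "\<bar>z n * local_field n (A n) z\<bar> \<le> \<bar>local_field n (A n) z\<bar>"
      using abs_ising_config_le[OF z, of n] by (auto simp: abs_mult intro: mult_left_le_one_le)
    also have "\<dots> \<le> lam" using abs_local_field_le[OF z, of "A n"] assms by linarith
    finally show "pmf (ising_pmf n A) z * exp (- lam) \<le> tilted_weight n A z"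
      unfolding tilted_weight_def by (intro mult_left_mono) auto
  qed
  then show ?thesis by (simp add: sum_distrib_right[symmetric] sum_pmf_ising_pmf)
qed

lemma local_field_flip_sq_ge:
  assumes i: "i \<in> {1..n-1}" and z: "z \<in> ising_configs n"
  shows "2 * (\<Delta> i)\<^sup>2 \<le> (local_field n \<Delta> z)\<^sup>2 + (local_field n \<Delta> (flip i z))\<^sup>2"
proof -
  have "z i * z i = 1" by (rule ising_config_sq[OF z]) (use i in auto)
  moreover have "(local_field n \<Delta> z)\<^sup>2 + (local_field n \<Delta> z - 2 * \<Delta> i * z i)\<^sup>2
      = 2 * (local_field n \<Delta> z - \<Delta> i * z i)\<^sup>2 + 2 * (\<Delta> i)\<^sup>2 * (z i * z i)"
    by (simp add: power2_eq_square algebra_simps)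
  ultimately show ?thesis using local_field_flip[OF i, of \<Delta> z] by simp
qed

text \<open>Pairing each configuration with its \<open>i\<close>-flip: the two values of the local field differ
  by \<open>2 \<Delta>\<^sub>i\<close>, and the tilted weights of the pair are comparable up to \<open>e\<^sup>2\<^sup>\<lambda>\<close>.\<close>
lemma screening_loss_quadratic_growth:
  assumes n: "n \<ge> 2" and sym: "\<forall>i\<in>{1..n}. \<forall>j\<in>{1..n}. A i j = A j i"
    and lam: "lam > 0" and rows: "\<forall>i\<in>{1..n}. (\<Sum>j\<in>{1..n}. \<bar>A i j\<bar>) \<le> lam"
    and i: "i \<in> {1..n-1}" and th: "(\<Sum>j\<in>{1..n-1}. \<bar>\<theta> j\<bar>) \<le> lam"
  shows "exp (- 3 * lam) / (2 * (1 + 2 * lam)) * (\<theta> i - A n i)\<^sup>2 \<le> screening_loss n A \<theta> - screening_loss n A (A n)"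
proof -
  let ?C = "ising_configs n" and ?\<nu> = "tilted_weight n A"
  define \<Delta> where "\<Delta> j = \<theta> j - A n j" for j
  define x where "x z = z n * local_field n \<Delta> z" for z
  have row_n: "(\<Sum>j\<in>{1..n-1}. \<bar>A n j\<bar>) \<le> lam" by (rule sum_abs_last_row_le) (use n rows in auto)
  have "(\<Sum>j\<in>{1..n-1}. \<bar>\<Delta> j\<bar>) \<le> (\<Sum>j\<in>{1..n-1}. \<bar>\<theta> j\<bar> + \<bar>A n j\<bar>)"
    unfolding \<Delta>_def by (intro sum_mono) auto
  then have \<Delta>_sum: "(\<Sum>j\<in>{1..n-1}. \<bar>\<Delta> j\<bar>) \<le> 2 * lam" using th row_n by (simp add: sum.distrib)
  have \<nu>0: "?\<nu> z \<ge> 0" for z unfolding tilted_weight_def by simp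
  have quad: "(local_field n \<Delta> z)\<^sup>2 / (2 * (1 + 2 * lam)) \<le> exp (- x z) - 1 + x z" if z: "z \<in> ?C" for z
  proof -
    have "z n * z n = 1" by (rule ising_config_sq[OF z]) (use n in auto)
    then have xx: "(x z)\<^sup>2 = (local_field n \<Delta> z)\<^sup>2" unfolding x_def by (simp add: power2_eq_square algebra_simps)
    have "\<bar>x z\<bar> \<le> \<bar>local_field n \<Delta> z\<bar>"
      unfolding x_def using abs_ising_config_le[OF z, of n] by (auto simp: abs_mult intro: mult_left_le_one_le)
    also have "\<dots> \<le> 2 * lam" using abs_local_field_le[OF z, of \<Delta>] \<Delta>_sum by linarith
    finally have "(x z)\<^sup>2 / (2 * (1 + 2 * lam)) \<le> (x z)\<^sup>2 / (2 * (1 + \<bar>x z\<bar>))"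
      by (intro divide_left_mono) auto
    also have "\<dots> \<le> exp (- x z) - 1 + x z" by (rule exp_minus_sub_linear_ge)
    finally show ?thesis using xx by simp
  qed
  have "exp (- 3 * lam) / (2 * (1 + 2 * lam)) * (\<Delta> i)\<^sup>2
      = exp (- 2 * lam) * (\<Delta> i)\<^sup>2 * exp (- lam) / (2 * (1 + 2 * lam))"
    by (simp add: exp_add[symmetric] algebra_simps)
  also have "\<dots> \<le> exp (- 2 * lam) * (\<Delta> i)\<^sup>2 * (\<Sum>z\<in>?C. ?\<nu> z) / (2 * (1 + 2 * lam))"
    using sum_tilted_weight_ge[where A = A, OF row_n] lam by (intro divide_right_mono mult_left_mono) auto
  also have "\<dots> \<le> (\<Sum>z\<in>?C. ?\<nu> z * (local_field n \<Delta> z)\<^sup>2) / (2 * (1 + 2 * lam))"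
    using i lam \<nu>0 tilted_weight_flip_ge[OF n sym rows i] local_field_flip_sq_ge[OF i]
    by (intro divide_right_mono flip_pairing_lower_bound[of i n]) auto
  also have "\<dots> \<le> (\<Sum>z\<in>?C. ?\<nu> z * (exp (- x z) - 1 + x z))"
    unfolding sum_divide_distrib using \<nu>0 quad
    by (intro sum_mono) (simp add: mult_left_mono times_divide_eq_right[symmetric] del: times_divide_eq_right)
  also have "\<dots> = screening_loss n A \<theta> - screening_loss n A (A n)"
    using screening_loss_excess_eq[OF n sym, of \<theta>] unfolding x_def \<Delta>_def by simp
  finally show ?thesis unfolding \<Delta>_def .
qed

lemma screening_loss_tangent_le:
  "screening_loss n A th + (\<Sum>i\<in>{1..n-1}. screening_grad n A th i * (th' i - th i)) \<le> screening_loss n A th'"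
proof -
  let ?C = "ising_configs n" and ?mu = "\<lambda>z. pmf (ising_pmf n A) z"
  have "(\<Sum>i\<in>{1..n-1}. screening_grad n A th i * (th' i - th i))
      = (\<Sum>z\<in>?C. ?mu z * (exp (- z n * local_field n th z) * ((- z n * local_field n th' z) - (- z n * local_field n th z))))"
  proof -
    have "(\<Sum>i\<in>{1..n-1}. screening_grad n A th i * (th' i - th i))
        = (\<Sum>i\<in>{1..n-1}. \<Sum>z\<in>?C. ?mu z * exp (- z n * local_field n th z) * (- z n) * ((th' i - th i) * z i))"
      unfolding screening_grad_def sum_distrib_right by (intro sum.cong refl) (simp add: algebra_simps)
    also have "\<dots> = (\<Sum>z\<in>?C. ?mu z * exp (- z n * local_field n th z) * (- z n) * (\<Sum>i\<in>{1..n-1}. (th' i - th i) * z i))"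
      by (subst sum.swap) (simp add: sum_distrib_left)
    also have "\<dots> = (\<Sum>z\<in>?C. ?mu z * (exp (- z n * local_field n th z) * ((- z n * local_field n th' z) - (- z n * local_field n th z))))"
    proof (intro sum.cong refl)
      fix z
      have eq: "(\<Sum>i\<in>{1..n-1}. (th' i - th i) * z i) = local_field n th' z - local_field n th z"
        unfolding local_field_def by (simp add: sum_subtractf[symmetric] algebra_simps)
      show "?mu z * exp (- z n * local_field n th z) * (- z n) * (\<Sum>i\<in>{1..n-1}. (th' i - th i) * z i)
          = ?mu z * (exp (- z n * local_field n th z) * ((- z n * local_field n th' z) - (- z n * local_field n th z)))"
        unfolding eq by (simp add: algebra_simps)
    qed
    finally show ?thesis .
  qed
  then have "screening_loss n A th + (\<Sum>i\<in>{1..n-1}. screening_grad n A th i * (th' i - th i))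
      = (\<Sum>z\<in>?C. ?mu z * (exp (- z n * local_field n th z) * (1 + ((- z n * local_field n th' z) - (- z n * local_field n th z)))))"
    unfolding screening_loss_def by (simp add: sum.distrib[symmetric] algebra_simps)
  also have "\<dots> \<le> screening_loss n A th'"
    unfolding screening_loss_def by (intro sum_mono mult_left_mono exp_tangent_le) auto
  finally show ?thesis .
qed

lemma screening_loss_average_le:
  assumes T: "T > 0"
  shows "real T * screening_loss n A (\<lambda>j. (\<Sum>k<T. th k j) / real T) \<le> (\<Sum>k<T. screening_loss n A (th k))"
proof -
  let ?C = "ising_configs n" and ?mu = "\<lambda>z. pmf (ising_pmf n A) z"
  have pw: "real T * exp (- z n * local_field n (\<lambda>j. (\<Sum>k<T. th k j) / real T) z) \<le> (\<Sum>k<T. exp (- z n * local_field n (th k) z))" for z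
  proof -
    define b where "b = (\<lambda>k. - z n * local_field n (th k) z)"
    define bb where "bb = (\<Sum>k<T. b k) / real T"
    have bb_eq: "- z n * local_field n (\<lambda>j. (\<Sum>k<T. th k j) / real T) z = bb"
    proof -
      have "local_field n (\<lambda>j. (\<Sum>k<T. th k j) / real T) z = (\<Sum>j\<in>{1..n-1}. \<Sum>k<T. th k j * z j / real T)"
        unfolding local_field_def by (simp add: sum_divide_distrib sum_distrib_right)
      also have "\<dots> = (\<Sum>k<T. \<Sum>j\<in>{1..n-1}. th k j * z j / real T)" by (rule sum.swap)
      also have "\<dots> = (\<Sum>k<T. local_field n (th k) z) / real T"
        unfolding local_field_def by (simp add: sum_divide_distrib)
      finally have "local_field n (\<lambda>j. (\<Sum>k<T. th k j) / real T) z = (\<Sum>k<T. local_field n (th k) z) / real T" .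
      then show ?thesis unfolding bb_def b_def by (simp add: sum_distrib_left sum_divide_distrib)
    qed
    have "(\<Sum>k<T. exp bb * (1 + (b k - bb))) \<le> (\<Sum>k<T. exp (b k))"
      by (intro sum_mono exp_tangent_le)
    moreover have "(\<Sum>k<T. exp bb * (1 + (b k - bb))) = real T * exp bb"
    proof -
      have "(\<Sum>k<T. exp bb * (1 + (b k - bb))) = exp bb * (real T + (\<Sum>k<T. b k) - real T * bb)"
        by (simp add: sum_distrib_left[symmetric] sum.distrib sum_subtractf algebra_simps)
      also have "(\<Sum>k<T. b k) = real T * bb" unfolding bb_def using T by simp
      finally show ?thesis by simp
    qed
    ultimately show ?thesis unfolding bb_eq b_def by simp
  qed
  have "real T * screening_loss n A (\<lambda>j. (\<Sum>k<T. th k j) / real T)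
      = (\<Sum>z\<in>?C. ?mu z * (real T * exp (- z n * local_field n (\<lambda>j. (\<Sum>k<T. th k j) / real T) z)))"
    unfolding screening_loss_def by (simp add: sum_distrib_left algebra_simps)
  also have "\<dots> \<le> (\<Sum>z\<in>?C. ?mu z * (\<Sum>k<T. exp (- z n * local_field n (th k) z)))"
    by (intro sum_mono mult_left_mono pw) auto
  also have "\<dots> = (\<Sum>k<T. screening_loss n A (th k))"
    unfolding screening_loss_def by (simp add: sum_distrib_left sum.swap[of _ "{..<T}"])
  finally show ?thesis .
qed

lemma abs_screening_grad_le:
  assumes "(\<Sum>j\<in>{1..n-1}. \<bar>th j\<bar>) \<le> lam"
  shows "\<bar>screening_grad n A th i\<bar> \<le> exp lam"
proof -
  let ?C = "ising_configs n" and ?mu = "\<lambda>z. pmf (ising_pmf n A) z"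
  have "\<bar>screening_grad n A th i\<bar> \<le> (\<Sum>z\<in>?C. \<bar>?mu z * (- z n * z i * exp (- z n * local_field n th z))\<bar>)"
    unfolding screening_grad_def by (rule sum_abs)
  also have "\<dots> \<le> (\<Sum>z\<in>?C. ?mu z * exp lam)"
  proof (rule sum_mono)
    fix z assume z: "z \<in> ?C"
    have zn: "\<bar>z n\<bar> \<le> 1" and zi: "\<bar>z i\<bar> \<le> 1" using abs_ising_config_le[OF z] by auto
    have "\<bar>- z n * local_field n th z\<bar> \<le> \<bar>local_field n th z\<bar>" using zn by (simp add: abs_mult mult_left_le_one_le)
    also have "\<dots> \<le> lam" using abs_local_field_le[OF z, of th] assms by linarith
    finally have e: "exp (- z n * local_field n th z) \<le> exp lam" by simp
    have "\<bar>z n * z i\<bar> \<le> 1" using zn zi by (simp add: abs_mult mult_le_one)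
    then have "\<bar>z n * z i\<bar> * exp (- z n * local_field n th z) \<le> 1 * exp lam"
      using e by (intro mult_mono) auto
    then have "\<bar>- z n * z i * exp (- z n * local_field n th z)\<bar> \<le> 1 * exp lam"
      by (simp add: abs_mult)
    then show "\<bar>?mu z * (- z n * z i * exp (- z n * local_field n th z))\<bar> \<le> ?mu z * exp lam"
      by (simp add: abs_mult mult_left_mono)
  qed
  also have "\<dots> = exp lam" by (simp add: sum_distrib_right[symmetric] sum_pmf_ising_pmf)
  finally show ?thesis .
qed

section \<open>The missing-data gradient estimator\<close>

lemma expectation_pair_pmf_mult:
  fixes u :: "'a \<Rightarrow> real" and v :: "'b \<Rightarrow> real"
  assumes M: "finite (set_pmf M)" and N: "finite (set_pmf N)"
  shows "measure_pmf.expectation (pair_pmf M N) (\<lambda>x. u (fst x) * v (snd x))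
       = measure_pmf.expectation M u * measure_pmf.expectation N v"
proof -
  have "measure_pmf.expectation (pair_pmf M N) (\<lambda>x. u (fst x) * v (snd x))
      = (\<Sum>x\<in>set_pmf M \<times> set_pmf N. u (fst x) * v (snd x) * pmf (pair_pmf M N) x)"
    by (rule integral_measure_pmf_real) (use M N in auto)
  also have "\<dots> = (\<Sum>x\<in>set_pmf M \<times> set_pmf N. (u (fst x) * pmf M (fst x)) * (v (snd x) * pmf N (snd x)))"
    by (intro sum.cong refl) (auto simp: pmf_pair)
  also have "\<dots> = (\<Sum>a\<in>set_pmf M. \<Sum>b\<in>set_pmf N. (u a * pmf M a) * (v b * pmf N b))"
    by (simp add: sum.cartesian_product case_prod_beta)
  also have "\<dots> = (\<Sum>a\<in>set_pmf M. u a * pmf M a) * (\<Sum>b\<in>set_pmf N. v b * pmf N b)"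
    by (simp add: sum_product)
  also have "(\<Sum>a\<in>set_pmf M. u a * pmf M a) = measure_pmf.expectation M u"
    by (rule integral_measure_pmf_real[symmetric]) (use M in auto)
  also have "(\<Sum>b\<in>set_pmf N. v b * pmf N b) = measure_pmf.expectation N v"
    by (rule integral_measure_pmf_real[symmetric]) (use N in auto)
  finally show ?thesis .
qed

lemma finite_set_Pi_pmf_bool:
  fixes p :: "'a \<Rightarrow> bool pmf"
  assumes "finite A"
  shows "finite (set_pmf (Pi_pmf A d p))"
proof (rule finite_subset[OF set_Pi_pmf_subset'[OF assms]])
  show "finite (PiE_dflt A d (set_pmf \<circ> p))"
    by (intro finite_PiE_dflt assms) (auto intro: finite_subset[of _ UNIV])
qed

lemma expectation_Pi_pmf_prod:
  fixes f :: "'a \<Rightarrow> bool \<Rightarrow> real" and p :: "'a \<Rightarrow> bool pmf"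
  assumes "finite A"
  shows "measure_pmf.expectation (Pi_pmf A d p) (\<lambda>y. \<Prod>x\<in>A. f x (y x))
       = (\<Prod>x\<in>A. measure_pmf.expectation (p x) (f x))"
  using assms
proof (induction A rule: finite_induct)
  case empty
  then show ?case by simp
next
  case (insert x A)
  have eq: "(\<Prod>x'\<in>insert x A. f x' ((g(x := y)) x')) = f x y * (\<Prod>x'\<in>A. f x' (g x'))" for g y
  proof -
    have "(\<Prod>x'\<in>A. f x' ((g(x := y)) x')) = (\<Prod>x'\<in>A. f x' (g x'))"
      using insert by (intro prod.cong) auto
    then show ?thesis using insert by simp
  qed
  have eq': "(\<Prod>x'\<in>A. f x' (if x' = x then y else g x')) = (\<Prod>x'\<in>A. f x' (g x'))" for g y
    using insert by (intro prod.cong) auto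
  have "measure_pmf.expectation (Pi_pmf (insert x A) d p) (\<lambda>y. \<Prod>x\<in>insert x A. f x (y x))
      = measure_pmf.expectation (pair_pmf (p x) (Pi_pmf A d p)) (\<lambda>z. f x (fst z) * (\<Prod>x'\<in>A. f x' (snd z x')))"
    using insert by (simp add: Pi_pmf_insert integral_map_pmf case_prod_unfold eq')
  also have "\<dots> = measure_pmf.expectation (p x) (f x) * measure_pmf.expectation (Pi_pmf A d p) (\<lambda>g. \<Prod>x'\<in>A. f x' (g x'))"
    by (rule expectation_pair_pmf_mult) (auto intro: finite_subset[of _ UNIV] finite_set_Pi_pmf_bool insert)
  also have "\<dots> = (\<Prod>x\<in>insert x A. measure_pmf.expectation (p x) (f x))"
    using insert by simp
  finally show ?case .
qed

definition mask :: "(nat \<Rightarrow> real) \<Rightarrow> (nat \<Rightarrow> bool) \<Rightarrow> (nat \<Rightarrow> real)" where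
  "mask z c = (\<lambda>i. if c i then z i else 0)"

lemma miss_pmf_mask:
  "miss_pmf n A p = ising_pmf n A \<bind> (\<lambda>z. map_pmf (mask z) (Pi_pmf {1..n} False (\<lambda>i. bernoulli_pmf (1 - p i))))"
  unfolding miss_pmf_def map_pmf_def mask_def by simp

lemma abs_set_pmf_miss_le: "X \<in> set_pmf (miss_pmf n A p) \<Longrightarrow> \<bar>X j\<bar> \<le> 1"
  using set_pmf_ising_pmf[of n A] abs_ising_config_le
  by (auto simp: miss_pmf_mask mask_def)

lemma expectation_miss_pmf:
  "measure_pmf.expectation (miss_pmf n A p) h
    = (\<Sum>z\<in>ising_configs n. pmf (ising_pmf n A) z *
         measure_pmf.expectation (Pi_pmf {1..n} False (\<lambda>i. bernoulli_pmf (1 - p i))) (\<lambda>c. h (mask z c)))"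
  unfolding miss_pmf_mask
  by (subst pmf_expectation_bind[where A = "ising_configs n"])
     (auto simp: set_pmf_ising_pmf integral_map_pmf intro!: finite_set_Pi_pmf_bool)

lemma prod_remove_last_and:
  fixes G :: "nat \<Rightarrow> real"
  assumes "n \<ge> 2" "i \<in> {1..n-1}"
  shows "(\<Prod>j\<in>{1..n}. G j) = G n * (G i * (\<Prod>j\<in>{1..n-1} - {i}. G j))"
proof -
  have "(\<Prod>j\<in>{1..n}. G j) = G n * (\<Prod>j\<in>{1..n} - {n}. G j)" by (rule prod.remove) (use assms in auto)
  also have "{1..n} - {n} = {1..n-1}" using assms by auto
  also have "(\<Prod>j\<in>{1..n-1}. G j) = G i * (\<Prod>j\<in>{1..n-1} - {i}. G j)" by (rule prod.remove) (use assms in auto)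
  finally show ?thesis .
qed

text \<open>The factor that coordinate \<open>j\<close> contributes to \<open>g_miss\<close> on the observation \<open>mask z c\<close>
  when \<open>c\<^sub>j = b\<close>; for \<open>j \<noteq> n, i\<close> a missing coordinate contributes \<open>(1 - p\<^sub>j)/(1 - p\<^sub>j) = 1\<close>.\<close>
definition miss_factor ::
    "nat \<Rightarrow> (nat \<Rightarrow> real) \<Rightarrow> (nat \<Rightarrow> real) \<Rightarrow> (nat \<Rightarrow> real) \<Rightarrow> nat \<Rightarrow> nat \<Rightarrow> bool \<Rightarrow> real" where
  "miss_factor n p v z i j b =
     (if j = n then - (if b then z n else 0) / (1 - p n)
      else if j = i then (if b then exp (- v i * z n * z i) * z i else 0) / (1 - p i)
      else (if b then exp (- v j * z n * z j) - p j else 1 - p j) / (1 - p j))"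

lemma g_miss_mask_eq_prod:
  assumes n: "n \<ge> 2" and p: "\<forall>i\<in>{1..n}. 0 \<le> p i \<and> p i < 1" and i: "i \<in> {1..n-1}"
  shows "g_miss n p w (mask z c) i
       = (\<Prod>j\<in>{1..n}. miss_factor n p (\<lambda>j. w j - w (n - 1 + j)) z i j (c j))"
proof (cases "c n")
  case True
  define v where "v j = w j - w (n - 1 + j)" for j
  have "(\<Prod>j\<in>{1..n-1} - {i}. miss_factor n p v z i j (c j))
      = (\<Prod>j\<in>{1..n-1} - {i}. (exp (- v j * mask z c n * mask z c j) - p j) / (1 - p j))"
  proof (rule prod.cong)
    fix j assume j: "j \<in> {1..n-1} - {i}"
    then have "j \<noteq> n" "j \<noteq> i" "j \<in> {1..n}" using n by auto
    moreover have "1 - p j \<noteq> 0" using p \<open>j \<in> {1..n}\<close> by fastforce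
    ultimately show "miss_factor n p v z i j (c j) = (exp (- v j * mask z c n * mask z c j) - p j) / (1 - p j)"
      using True by (auto simp: miss_factor_def mask_def)
  qed simp
  moreover have "miss_factor n p v z i i (c i) = exp (- v i * mask z c n * mask z c i) * mask z c i / (1 - p i)"
    using True i n by (auto simp: miss_factor_def mask_def)
  moreover have "miss_factor n p v z i n (c n) = - (mask z c n / (1 - p n))"
    using True by (simp add: miss_factor_def mask_def)
  ultimately show ?thesis
    unfolding prod_remove_last_and[OF n i] g_miss_def Let_def v_def[abs_def, symmetric] by simp
next
  case False
  then show ?thesis unfolding prod_remove_last_and[OF n i] g_miss_def by (simp add: miss_factor_def mask_def)
qed

lemma expectation_miss_factor:
  assumes "0 \<le> p j" "p j < 1"
  shows "measure_pmf.expectation (bernoulli_pmf (1 - p j)) (miss_factor n p v z i j)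
       = (if j = n then - z n else if j = i then exp (- v i * z n * z i) * z i else exp (- v j * z n * z j))"
  using assms by (subst integral_bernoulli_pmf) (auto simp: miss_factor_def field_simps)

text \<open>Given the configuration \<open>z\<close>, the missingness indicators are independent, so the
  expectation factorises and every factor is unbiased.\<close>
lemma expectation_g_miss_mask:
  fixes w :: "nat \<Rightarrow> real"
  assumes n: "n \<ge> 2" and p: "\<forall>i\<in>{1..n}. 0 \<le> p i \<and> p i < 1" and i: "i \<in> {1..n-1}"
  defines "v \<equiv> \<lambda>j. w j - w (n - 1 + j)"
  shows "measure_pmf.expectation (Pi_pmf {1..n} False (\<lambda>i. bernoulli_pmf (1 - p i))) (\<lambda>c. g_miss n p w (mask z c) i)
       = - z n * z i * exp (- z n * local_field n v z)"
proof -
  have "measure_pmf.expectation (Pi_pmf {1..n} False (\<lambda>i. bernoulli_pmf (1 - p i))) (\<lambda>c. g_miss n p w (mask z c) i)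
      = (\<Prod>j\<in>{1..n}. measure_pmf.expectation (bernoulli_pmf (1 - p j)) (miss_factor n p v z i j))"
    unfolding g_miss_mask_eq_prod[OF n p i] v_def by (rule expectation_Pi_pmf_prod) simp
  also have "\<dots> = (\<Prod>j\<in>{1..n}. if j = n then - z n else if j = i then exp (- v i * z n * z i) * z i
                                   else exp (- v j * z n * z j))"
    using p by (intro prod.cong refl) (simp add: expectation_miss_factor)
  also have "\<dots> = - z n * (exp (- v i * z n * z i) * z i * (\<Prod>j\<in>{1..n-1} - {i}. exp (- v j * z n * z j)))"
    unfolding prod_remove_last_and[OF n i] using i n
    by (intro arg_cong2[where f = "(*)"] arg_cong2[where f = "(*)"] prod.cong) auto
  also have "(\<Prod>j\<in>{1..n-1} - {i}. exp (- v j * z n * z j)) = exp (\<Sum>j\<in>{1..n-1} - {i}. - v j * z n * z j)"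
    by (simp add: exp_sum)
  also have "- z n * (exp (- v i * z n * z i) * z i * \<dots>)
      = - z n * z i * exp (- v i * z n * z i + (\<Sum>j\<in>{1..n-1} - {i}. - v j * z n * z j))"
    by (simp only: exp_add mult_ac)
  also have "- v i * z n * z i + (\<Sum>j\<in>{1..n-1} - {i}. - v j * z n * z j) = - z n * local_field n v z"
  proof -
    have "(\<Sum>j\<in>{1..n-1}. - v j * z n * z j) = - v i * z n * z i + (\<Sum>j\<in>{1..n-1} - {i}. - v j * z n * z j)"
      by (rule sum.remove) (use i in auto)
    then show ?thesis unfolding local_field_def by (simp add: sum_distrib_left sum_negf algebra_simps)
  qed
  finally show ?thesis .
qed

lemma expectation_g_miss:
  assumes n: "n \<ge> 2" and p: "\<forall>i\<in>{1..n}. 0 \<le> p i \<and> p i < 1" and i: "i \<in> {1..n-1}"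
  shows "measure_pmf.expectation (miss_pmf n A p) (\<lambda>X. g_miss n p w X i) = screening_grad n A (\<lambda>j. w j - w (n - 1 + j)) i"
  unfolding expectation_miss_pmf screening_grad_def expectation_g_miss_mask[OF n p i] by simp


lemma finite_set_pmf_miss: "finite (set_pmf (miss_pmf n A p))"
proof -
  have "set_pmf (miss_pmf n A p) \<subseteq> (\<Union>z\<in>ising_configs n. mask z ` set_pmf (Pi_pmf {1..n} False (\<lambda>i. bernoulli_pmf (1 - p i))))"
    unfolding miss_pmf_mask using set_pmf_ising_pmf by auto
  moreover have "finite (\<Union>z\<in>ising_configs n. mask z ` set_pmf (Pi_pmf {1..n} False (\<lambda>i. bernoulli_pmf (1 - p i))))"
    by (intro finite_UN_I finite_ising_configs finite_imageI finite_set_Pi_pmf_bool) auto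
  ultimately show ?thesis by (rule finite_subset)
qed


lemma abs_miss_samples_le:
  assumes "xs \<in> set_pmf (miss_samples n A p T)"
  shows "\<bar>xs t j\<bar> \<le> 1"
proof (cases "t \<in> {1..T}")
  case True
  then have "xs t \<in> set_pmf (miss_pmf n A p)"
    using assms unfolding miss_samples_def by (auto simp: set_Pi_pmf PiE_dflt_def)
  then show ?thesis by (rule abs_set_pmf_miss_le)
next
  case False
  then show ?thesis using assms unfolding miss_samples_def by (auto simp: set_Pi_pmf PiE_dflt_def)
qed

section \<open>The SMG iteration\<close>

lemma sum_split_two_blocks:
  fixes f :: "nat \<Rightarrow> real"
  assumes n: "n \<ge> 2"
  shows "(\<Sum>k\<in>{1..2*n-1}. f k) = (\<Sum>j\<in>{1..n-1}. f j + f (n - 1 + j)) + f (2*n-1)"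
proof -
  have bij: "bij_betw (\<lambda>j. n - 1 + j) {1..n-1} {n..2*n-2}"
    by (rule bij_betwI[where g = "\<lambda>k. k - (n - 1)"]) (use n in auto)
  have u: "{1..2*n-1} = {1..n-1} \<union> {n..2*n-2} \<union> {2*n-1}" using n by auto
  have "(\<Sum>k\<in>{1..2*n-1}. f k) = (\<Sum>k\<in>{1..n-1}. f k) + (\<Sum>k\<in>{n..2*n-2}. f k) + f (2*n-1)"
    unfolding u using n by (subst sum.union_disjoint; auto)+
  also have "(\<Sum>k\<in>{n..2*n-2}. f k) = (\<Sum>j\<in>{1..n-1}. f (n - 1 + j))"
    using sum.reindex_bij_betw[OF bij, of f] by simp
  finally show ?thesis by (simp add: sum.distrib)
qed

lemma G_miss_lower: "j \<in> {1..n-1} \<Longrightarrow> G_miss n p w X j = g_miss n p w X j"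
  by (simp add: G_miss_def)

lemma G_miss_upper:
  assumes "n \<ge> 2" "j \<in> {1..n-1}"
  shows "G_miss n p w X (n - 1 + j) = - g_miss n p w X j"
proof -
  have a: "\<not> (1 \<le> n - 1 + j \<and> n - 1 + j \<le> n - 1)" "n \<le> n - 1 + j \<and> n - 1 + j \<le> 2 * n - 2"
    "n - 1 + j - (n - 1) = j" using assms by auto
  show ?thesis unfolding G_miss_def using a by presburger
qed

lemma G_miss_last:
  assumes "n \<ge> 2" shows "G_miss n p w X (2*n-1) = 0"
proof -
  have a: "\<not> (1 \<le> 2*n-1 \<and> 2*n-1 \<le> n - 1)" "\<not> (n \<le> 2*n-1 \<and> 2*n-1 \<le> 2 * n - 2)"
    using assms by auto
  show ?thesis unfolding G_miss_def using a by presburger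
qed

lemma sum_mult_G_miss:
  assumes "n \<ge> 2"
  shows "(\<Sum>k\<in>{1..2*n-1}. u k * G_miss n p w X k) = (\<Sum>i\<in>{1..n-1}. (u i - u (n - 1 + i)) * g_miss n p w X i)"
proof -
  have "(\<Sum>j\<in>{1..n-1}. u j * G_miss n p w X j + u (n - 1 + j) * G_miss n p w X (n - 1 + j))
      = (\<Sum>i\<in>{1..n-1}. (u i - u (n - 1 + i)) * g_miss n p w X i)"
  proof (intro sum.cong refl)
    fix j assume j: "j \<in> {1..n-1}"
    show "u j * G_miss n p w X j + u (n - 1 + j) * G_miss n p w X (n - 1 + j) = (u j - u (n - 1 + j)) * g_miss n p w X j"
      unfolding G_miss_lower[OF j] G_miss_upper[OF assms j] by (simp add: algebra_simps)
  qed
  then show ?thesis unfolding sum_split_two_blocks[OF assms] G_miss_last[OF assms] by simp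
qed

lemma sum_abs_block_diff_le:
  fixes w :: "nat \<Rightarrow> real"
  assumes n: "n \<ge> 2" and nn: "\<forall>i\<in>{1..2*n-1}. w i \<ge> 0"
  shows "(\<Sum>j\<in>{1..n-1}. \<bar>w j - w (n - 1 + j)\<bar>) \<le> (\<Sum>k\<in>{1..2*n-1}. w k)"
proof -
  have "(\<Sum>j\<in>{1..n-1}. \<bar>w j - w (n - 1 + j)\<bar>) \<le> (\<Sum>j\<in>{1..n-1}. w j + w (n - 1 + j))"
  proof (rule sum_mono)
    fix j assume j: "j \<in> {1..n-1}"
    have m1: "j \<in> {1..2*n-1}" and m2: "n - 1 + j \<in> {1..2*n-1}" using n j by auto
    have "w j \<ge> 0" "w (n - 1 + j) \<ge> 0" using bspec[OF nn m1] bspec[OF nn m2] by auto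
    then show "\<bar>w j - w (n - 1 + j)\<bar> \<le> w j + w (n - 1 + j)" by linarith
  qed
  also have "\<dots> \<le> (\<Sum>k\<in>{1..2*n-1}. w k)"
    unfolding sum_split_two_blocks[OF n] using nn n by auto
  finally show ?thesis .
qed

text \<open>\<open>q\<close> is any lower bound on the observation probabilities \<open>1 - p\<^sub>i\<close> (the theorem takes
  \<open>q = 1 - p\<^sub>m\<^sub>a\<^sub>x\<close>), \<open>B\<close> bounds the estimates \<open>G_miss\<close> on the simplex, and \<open>eta_small\<close> keeps
  every multiplicative update factor within \<open>[3/4, 5/4]\<close>.\<close>
locale smg_setting =
  fixes n :: nat and p :: "nat \<Rightarrow> real" and lam \<eta> q :: real
  assumes n2: "n \<ge> 2"
    and p_bnd: "\<forall>i\<in>{1..n}. 0 \<le> p i \<and> p i < 1"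
    and q_pos: "q > 0" and q_le: "\<forall>i\<in>{1..n}. q \<le> 1 - p i"
    and lam_pos: "lam > 0" and eta_pos: "\<eta> > 0"
    and eta_small: "\<eta> * (2 * (exp (lam / q) / q\<^sup>2)) \<le> 1/4"
begin

definition "B = exp (lam / q) / q\<^sup>2"
definition "num_weights = 2 * n - 1"

lemma B_pos: "B > 0" unfolding B_def using q_pos by simp

lemma q_le1: "q \<le> 1" using q_le p_bnd n2 by force

lemma exp_lam_le_B: "exp lam \<le> B"
proof -
  have "lam \<le> lam / q" using lam_pos q_pos q_le1 by (simp add: le_divide_eq mult_left_le)
  then have "exp lam \<le> exp (lam / q)" by simp
  also have "\<dots> \<le> exp (lam / q) / q\<^sup>2"
    using q_pos q_le1 by (simp add: le_divide_eq power_le_one mult_left_le)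
  finally show ?thesis unfolding B_def .
qed

definition in_simplex :: "(nat \<Rightarrow> real) \<Rightarrow> bool" where
  "in_simplex w \<longleftrightarrow> (\<forall>i\<in>{1..num_weights}. w i > 0) \<and> (\<Sum>i\<in>{1..num_weights}. w i) = lam"

lemma abs_g_miss_le:
  assumes vs: "(\<Sum>j\<in>{1..n-1}. \<bar>w j - w (n - 1 + j)\<bar>) \<le> lam"
    and X: "\<And>j. \<bar>X j\<bar> \<le> 1" and i: "i \<in> {1..n-1}"
  shows "\<bar>g_miss n p w X i\<bar> \<le> B"
proof -
  define v where "v = (\<lambda>j. w j - w (n - 1 + j))"
  have pin: "0 \<le> p j \<and> p j < 1 \<and> q \<le> 1 - p j" if "j \<in> {1..n}" for j using that p_bnd q_le by auto
  have iN: "i \<in> {1..n}" and nN: "n \<in> {1..n}" using i n2 by auto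
  have XnXj: "\<bar>v j * X n * X j\<bar> \<le> \<bar>v j\<bar>" for j
  proof -
    have "\<bar>X n * X j\<bar> \<le> 1" using X[of n] X[of j] by (simp add: abs_mult mult_le_one)
    then show ?thesis by (simp add: abs_mult mult.assoc mult_left_le)
  qed
  have f1: "\<bar>X n / (1 - p n)\<bar> \<le> 1 / q" using X[of n] pin[OF nN] q_pos by (intro abs_div_one_minus_le) auto
  have f2: "\<bar>exp (- v i * X n * X i) * X i / (1 - p i)\<bar> \<le> exp (\<bar>v i\<bar> / q) * (1 / q)"
  proof -
    have "exp (- v i * X n * X i) \<le> exp \<bar>v i\<bar>" using XnXj[of i] by simp
    also have "\<dots> \<le> exp (\<bar>v i\<bar> / q)" using q_pos q_le1 by (simp add: le_divide_eq mult_left_le)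
    finally have e: "exp (- v i * X n * X i) \<le> exp (\<bar>v i\<bar> / q)" .
    have "\<bar>exp (- v i * X n * X i) * X i / (1 - p i)\<bar> = exp (- v i * X n * X i) * \<bar>X i / (1 - p i)\<bar>"
      by (simp add: abs_mult abs_div)
    also have "\<dots> \<le> exp (\<bar>v i\<bar> / q) * (1 / q)"
      using e X[of i] pin[OF iN] q_pos by (intro mult_mono abs_div_one_minus_le) auto
    finally show ?thesis .
  qed
  have f3: "\<bar>\<Prod>j\<in>{1..n-1} - {i}. (exp (- v j * X n * X j) - p j) / (1 - p j)\<bar>
      \<le> exp (\<Sum>j\<in>{1..n-1} - {i}. \<bar>v j\<bar> / q)"
    using pin q_pos XnXj by (intro abs_prod_missing_correction_le) auto
  have "\<bar>g_miss n p w X i\<bar> = \<bar>X n / (1 - p n)\<bar> * \<bar>exp (- v i * X n * X i) * X i / (1 - p i)\<bar>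
      * \<bar>\<Prod>j\<in>{1..n-1} - {i}. (exp (- v j * X n * X j) - p j) / (1 - p j)\<bar>"
    unfolding g_miss_def Let_def v_def by (simp add: abs_mult)
  also have "\<dots> \<le> (1 / q) * (exp (\<bar>v i\<bar> / q) * (1 / q)) * exp (\<Sum>j\<in>{1..n-1} - {i}. \<bar>v j\<bar> / q)"
    using f1 f2 f3 q_pos by (intro mult_mono) auto
  also have "\<dots> = exp ((\<Sum>j\<in>{1..n-1}. \<bar>v j\<bar>) / q) / q\<^sup>2"
  proof -
    have "(\<Sum>j\<in>{1..n-1}. \<bar>v j\<bar> / q) = \<bar>v i\<bar> / q + (\<Sum>j\<in>{1..n-1} - {i}. \<bar>v j\<bar> / q)"
      by (rule sum.remove) (use i in auto)
    then show ?thesis by (simp add: sum_divide_distrib[symmetric] exp_add[symmetric] power2_eq_square)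
  qed
  also have "\<dots> \<le> B" unfolding B_def using vs q_pos by (simp add: v_def divide_right_mono)
  finally show ?thesis .
qed

lemma num_weights_ge_3: "num_weights \<ge> 3" unfolding num_weights_def using n2 by auto

lemma in_simplex_sum_abs_diff_le:
  assumes "in_simplex w" shows "(\<Sum>j\<in>{1..n-1}. \<bar>w j - w (n - 1 + j)\<bar>) \<le> lam"
  using sum_abs_block_diff_le[OF n2, of w] assms unfolding in_simplex_def num_weights_def by (auto intro: less_imp_le)

lemma abs_G_miss_le:
  assumes vs: "(\<Sum>j\<in>{1..n-1}. \<bar>w j - w (n - 1 + j)\<bar>) \<le> lam"
    and X: "\<And>j. \<bar>X j\<bar> \<le> 1"
  shows "\<bar>G_miss n p w X k\<bar> \<le> B"
proof -
  have a: "\<bar>g_miss n p w X i\<bar> \<le> B" if "i \<in> {1..n-1}" for i by (rule abs_g_miss_le[OF vs X that])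
  show ?thesis
  proof (cases "1 \<le> k \<and> k \<le> n - 1")
    case True then show ?thesis using a[of k] by (simp add: G_miss_def)
  next
    case False
    show ?thesis
    proof (cases "n \<le> k \<and> k \<le> 2 * n - 2")
      case True
      then have "k - (n - 1) \<in> {1..n-1}" using n2 by auto
      moreover have "G_miss n p w X k = - g_miss n p w X (k - (n-1))" unfolding G_miss_def using True False by auto
      ultimately show ?thesis using a[of "k - (n-1)"] by simp
    next
      case False2: False
      have "G_miss n p w X k = 0" unfolding G_miss_def using False False2 by auto
      then show ?thesis using B_pos by simp
    qed
  qed
qed

definition step_shift :: "(nat \<Rightarrow> real) \<Rightarrow> (nat \<Rightarrow> real) \<Rightarrow> real" where
  "step_shift w X = (\<Sum>i\<in>{1..num_weights}. w i * G_miss n p w X i) / lam"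

lemma smg_step_eq: "smg_step n p lam \<eta> w X i = w i * (1 - \<eta> * (G_miss n p w X i - step_shift w X))"
  unfolding smg_step_def step_shift_def num_weights_def Let_def by (simp add: algebra_simps)

lemma abs_step_shift_le:
  assumes w: "in_simplex w" and X: "\<And>j. \<bar>X j\<bar> \<le> 1"
  shows "\<bar>step_shift w X\<bar> \<le> B"
proof -
  have "\<bar>\<Sum>k\<in>{1..num_weights}. w k * G_miss n p w X k\<bar> \<le> (\<Sum>k\<in>{1..num_weights}. w k * B)"
  proof (rule order_trans[OF sum_abs], rule sum_mono)
    fix k assume k: "k \<in> {1..num_weights}"
    have "w k > 0" using w k unfolding in_simplex_def by auto
    moreover have "\<bar>G_miss n p w X k\<bar> \<le> B"
      by (rule abs_G_miss_le[OF in_simplex_sum_abs_diff_le[OF w] X])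
    ultimately show "\<bar>w k * G_miss n p w X k\<bar> \<le> w k * B" by (simp add: abs_mult mult_left_mono)
  qed
  also have "\<dots> = lam * B" using w unfolding in_simplex_def by (simp add: sum_distrib_right[symmetric])
  finally show ?thesis unfolding step_shift_def using lam_pos by (simp add: abs_div divide_le_eq mult.commute)
qed

lemma abs_step_exponent_le:
  assumes w: "in_simplex w" and X: "\<And>j. \<bar>X j\<bar> \<le> 1"
  shows "\<bar>\<eta> * (G_miss n p w X i - step_shift w X)\<bar> \<le> 2 * \<eta> * B"
proof -
  have "\<bar>G_miss n p w X i\<bar> \<le> B" by (rule abs_G_miss_le[OF in_simplex_sum_abs_diff_le[OF w] X])
  moreover have "\<bar>step_shift w X\<bar> \<le> B" by (rule abs_step_shift_le[OF w X])
  ultimately have "\<bar>G_miss n p w X i - step_shift w X\<bar> \<le> 2 * B" by linarith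
  then show ?thesis using eta_pos by (simp add: abs_mult mult_left_mono)
qed

lemma abs_step_exponent_le_quarter:
  assumes "in_simplex w" and "\<And>j. \<bar>X j\<bar> \<le> 1"
  shows "\<bar>\<eta> * (G_miss n p w X i - step_shift w X)\<bar> \<le> 1/4"
proof -
  have "\<bar>\<eta> * (G_miss n p w X i - step_shift w X)\<bar> \<le> 2 * \<eta> * B" by (rule abs_step_exponent_le[OF assms])
  then show ?thesis using eta_small unfolding B_def by linarith
qed

lemma smg_step_in_simplex:
  assumes w: "in_simplex w" and X: "\<And>j. \<bar>X j\<bar> \<le> 1"
  shows "in_simplex (smg_step n p lam \<eta> w X)"
  unfolding in_simplex_def
proof
  show "\<forall>i\<in>{1..num_weights}. 0 < smg_step n p lam \<eta> w X i"
  proof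
    fix i assume i: "i \<in> {1..num_weights}"
    have "\<bar>\<eta> * (G_miss n p w X i - step_shift w X)\<bar> \<le> 1/4" by (rule abs_step_exponent_le_quarter[OF w X])
    then have "1 - \<eta> * (G_miss n p w X i - step_shift w X) > 0" by linarith
    moreover have "w i > 0" using w i unfolding in_simplex_def by auto
    ultimately show "0 < smg_step n p lam \<eta> w X i" unfolding smg_step_eq by simp
  qed
  have "(\<Sum>i\<in>{1..num_weights}. smg_step n p lam \<eta> w X i)
      = (\<Sum>i\<in>{1..num_weights}. w i) - \<eta> * (\<Sum>i\<in>{1..num_weights}. w i * G_miss n p w X i)
        + \<eta> * step_shift w X * (\<Sum>i\<in>{1..num_weights}. w i)"
    unfolding smg_step_eq by (simp add: algebra_simps sum_subtractf sum.distrib sum_distrib_left sum_distrib_right)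
  also have "\<dots> = lam" using w lam_pos unfolding in_simplex_def step_shift_def by simp
  finally show "(\<Sum>i\<in>{1..num_weights}. smg_step n p lam \<eta> w X i) = lam" .
qed

abbreviation iterate where "iterate xs k \<equiv> smg_iterate n p lam \<eta> xs k"

lemma iterate_in_simplex:
  assumes "\<And>t j. t \<in> {1..k} \<Longrightarrow> \<bar>xs t j\<bar> \<le> 1"
  shows "in_simplex (iterate xs k)"
  using assms
proof (induction k)
  case 0
  have "real num_weights > 0" using num_weights_ge_3 by simp
  then show ?case unfolding in_simplex_def using lam_pos by (simp add: num_weights_def)
next
  case (Suc k)
  have "in_simplex (iterate xs k)" by (rule Suc.IH) (use Suc.prems in auto)
  then show ?case by (simp add: smg_step_in_simplex Suc.prems)
qed

lemma iterate_cong: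
  assumes "\<And>t. t \<in> {1..k} \<Longrightarrow> xs t = ys t"
  shows "iterate xs k = iterate ys k"
  using assms by (induction k) auto

definition comparator_potential :: "(nat \<Rightarrow> real) \<Rightarrow> (nat \<Rightarrow> real) \<Rightarrow> real" where
  "comparator_potential u w = (\<Sum>i\<in>{1..num_weights}. u i * ln (w i))"

text \<open>The usual exponentiated-gradient potential argument; \<open>ln (1 - x) \<ge> - x - 2 x\<^sup>2\<close> bounds the
  second-order term.\<close>
lemma comparator_potential_step_ge:
  assumes w: "in_simplex w" and X: "\<And>j. \<bar>X j\<bar> \<le> 1"
    and u0: "\<forall>i\<in>{1..num_weights}. u i \<ge> 0" and usum: "(\<Sum>i\<in>{1..num_weights}. u i) = lam"
  shows "\<eta> * (\<Sum>i\<in>{1..num_weights}. (w i - u i) * G_miss n p w X i)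
         \<le> comparator_potential u (smg_step n p lam \<eta> w X) - comparator_potential u w + 8 * \<eta>\<^sup>2 * B\<^sup>2 * lam"
proof -
  define x where "x i = \<eta> * (G_miss n p w X i - step_shift w X)" for i
  define c where "c = 8 * \<eta>\<^sup>2 * B\<^sup>2"
  have x_quarter: "\<bar>x i\<bar> \<le> 1/4" for i unfolding x_def by (rule abs_step_exponent_le_quarter[OF w X])
  have x_le: "\<bar>x i\<bar> \<le> 2 * \<eta> * B" for i unfolding x_def by (rule abs_step_exponent_le[OF w X])
  have ln_step: "ln (smg_step n p lam \<eta> w X i) = ln (w i) + ln (1 - x i)" if "i \<in> {1..num_weights}" for i
  proof -
    have "w i > 0" using w that unfolding in_simplex_def by auto
    moreover have "1 - x i > 0" using x_quarter[of i] by linarith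
    ultimately show ?thesis by (simp add: smg_step_eq ln_mult x_def)
  qed
  have ln_ge: "- x i - c \<le> ln (1 - x i)" for i
  proof -
    have "- x i - 2 * (x i)\<^sup>2 \<le> ln (1 - x i)" by (rule ln_one_minus_ge) (use x_quarter[of i] in auto)
    moreover have "(x i)\<^sup>2 \<le> (2 * \<eta> * B)\<^sup>2" using x_le[of i] by (metis abs_ge_zero power2_abs power_mono)
    ultimately show ?thesis unfolding c_def by (simp add: power_mult_distrib)
  qed
  have "(\<Sum>i\<in>{1..num_weights}. u i * (- x i - c))
      \<le> (\<Sum>i\<in>{1..num_weights}. u i * ln (1 - x i))"
    using u0 ln_ge by (intro sum_mono mult_left_mono) auto
  also have "\<dots> = comparator_potential u (smg_step n p lam \<eta> w X) - comparator_potential u w"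
    unfolding comparator_potential_def by (simp add: ln_step sum_subtractf[symmetric] algebra_simps)
  finally have gain: "(\<Sum>i\<in>{1..num_weights}. u i * (- x i - c))
      \<le> comparator_potential u (smg_step n p lam \<eta> w X) - comparator_potential u w" .
  have ux: "(\<Sum>i\<in>{1..num_weights}. u i * x i)
      = \<eta> * (\<Sum>i\<in>{1..num_weights}. u i * G_miss n p w X i) - \<eta> * (\<Sum>i\<in>{1..num_weights}. w i * G_miss n p w X i)"
  proof -
    have "(\<Sum>i\<in>{1..num_weights}. u i * x i)
        = \<eta> * (\<Sum>i\<in>{1..num_weights}. u i * G_miss n p w X i) - \<eta> * step_shift w X * lam"
      unfolding x_def usum[symmetric]
      by (simp add: sum_subtractf sum_distrib_left sum_distrib_right algebra_simps)
    also have "\<eta> * step_shift w X * lam = \<eta> * (\<Sum>i\<in>{1..num_weights}. w i * G_miss n p w X i)"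
      unfolding step_shift_def using lam_pos by simp
    finally show ?thesis .
  qed
  have "(\<Sum>i\<in>{1..num_weights}. u i * (- x i - c))
      = - (\<Sum>i\<in>{1..num_weights}. u i * x i) - (\<Sum>i\<in>{1..num_weights}. u i) * c"
    by (simp add: right_diff_distrib sum_subtractf sum_negf sum_distrib_right)
  also have "\<dots> = \<eta> * (\<Sum>i\<in>{1..num_weights}. (w i - u i) * G_miss n p w X i) - c * lam"
    unfolding ux usum by (simp add: left_diff_distrib sum_subtractf right_diff_distrib)
  finally show ?thesis using gain unfolding c_def by linarith
qed

lemma comparator_potential_gain_le:
  assumes w: "in_simplex w"
    and u0: "\<forall>i\<in>{1..num_weights}. u i \<ge> 0" and usum: "(\<Sum>i\<in>{1..num_weights}. u i) = lam"
  shows "comparator_potential u w - comparator_potential u (\<lambda>_. lam / num_weights) \<le> lam * ln num_weights"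
proof -
  have "ln (w i) - ln (lam / num_weights) \<le> ln num_weights" if i: "i \<in> {1..num_weights}" for i
  proof -
    have pos: "w i > 0" using w i unfolding in_simplex_def by auto
    have "w i \<le> (\<Sum>j\<in>{1..num_weights}. w j)"
      by (rule member_le_sum) (use w i in \<open>auto simp: in_simplex_def intro: less_imp_le\<close>)
    then have "ln (w i) \<le> ln lam" using w pos by (simp add: in_simplex_def)
    moreover have "ln (lam / num_weights) = ln lam - ln num_weights"
      using lam_pos num_weights_ge_3 by (simp add: ln_div)
    ultimately show ?thesis by linarith
  qed
  then have "comparator_potential u w - comparator_potential u (\<lambda>_. lam / num_weights)
      \<le> (\<Sum>i\<in>{1..num_weights}. u i * ln num_weights)"
    unfolding comparator_potential_def sum_subtractf[symmetric] right_diff_distrib[symmetric]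
    using u0 by (intro sum_mono mult_left_mono) auto
  also have "\<dots> = lam * ln num_weights" using usum by (simp add: sum_distrib_right[symmetric])
  finally show ?thesis .
qed

lemma regret_le:
  assumes X: "\<And>t j. t \<in> {1..T} \<Longrightarrow> \<bar>xs t j\<bar> \<le> 1"
    and u0: "\<forall>i\<in>{1..num_weights}. u i \<ge> 0" and usum: "(\<Sum>i\<in>{1..num_weights}. u i) = lam"
  shows "(\<Sum>k<T. \<Sum>i\<in>{1..num_weights}. (iterate xs k i - u i) * G_miss n p (iterate xs k) (xs (Suc k)) i)
          \<le> lam * ln num_weights / \<eta> + 8 * real T * \<eta> * B\<^sup>2 * lam"
proof -
  define \<Phi> where "\<Phi> k = comparator_potential u (iterate xs k)" for k
  have "\<eta> * (\<Sum>i\<in>{1..num_weights}. (iterate xs k i - u i) * G_miss n p (iterate xs k) (xs (Suc k)) i)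
      \<le> \<Phi> (Suc k) - \<Phi> k + 8 * \<eta>\<^sup>2 * B\<^sup>2 * lam" if "k < T" for k
    unfolding \<Phi>_def smg_iterate.simps
    by (rule comparator_potential_step_ge[OF iterate_in_simplex _ u0 usum]) (use X that in auto)
  then have "\<eta> * (\<Sum>k<T. \<Sum>i\<in>{1..num_weights}. (iterate xs k i - u i) * G_miss n p (iterate xs k) (xs (Suc k)) i)
      \<le> (\<Sum>k<T. \<Phi> (Suc k) - \<Phi> k + 8 * \<eta>\<^sup>2 * B\<^sup>2 * lam)"
    unfolding sum_distrib_left by (intro sum_mono) auto
  also have "\<dots> = \<Phi> T - \<Phi> 0 + T * (8 * \<eta>\<^sup>2 * B\<^sup>2 * lam)"
    by (simp add: sum.distrib sum_lessThan_telescope)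
  also have "\<Phi> T - \<Phi> 0 \<le> lam * ln num_weights"
    unfolding \<Phi>_def using comparator_potential_gain_le[OF iterate_in_simplex u0 usum] X
    by (simp add: num_weights_def)
  finally have "\<eta> * (\<Sum>k<T. \<Sum>i\<in>{1..num_weights}. (iterate xs k i - u i) * G_miss n p (iterate xs k) (xs (Suc k)) i)
      \<le> lam * ln num_weights + T * (8 * \<eta>\<^sup>2 * B\<^sup>2 * lam)" by simp
  then show ?thesis using eta_pos by (simp add: field_simps power2_eq_square)
qed

end

section \<open>Optimisation error of the averaged iterate\<close>

text \<open>The row \<open>A\<^sub>n\<close> as a point of the simplex: positive parts in the first block, negative parts
  in the second, and the slack \<open>\<lambda> - \<parallel>A\<^sub>n\<parallel>\<^sub>1\<close> in the last coordinate.\<close>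
definition row_weights :: "nat \<Rightarrow> (nat \<Rightarrow> nat \<Rightarrow> real) \<Rightarrow> real \<Rightarrow> nat \<Rightarrow> real" where
  "row_weights n A lam k =
     (if 1 \<le> k \<and> k \<le> n - 1 then max (A n k) 0
      else if n \<le> k \<and> k \<le> 2 * n - 2 then max (- A n (k - (n - 1))) 0
      else lam - (\<Sum>j\<in>{1..n-1}. \<bar>A n j\<bar>))"

lemma row_weights_lower: "j \<in> {1..n-1} \<Longrightarrow> row_weights n A lam j = max (A n j) 0"
  by (simp add: row_weights_def)

lemma row_weights_upper:
  assumes "n \<ge> 2" "j \<in> {1..n-1}"
  shows "row_weights n A lam (n - 1 + j) = max (- A n j) 0"
proof -
  have "\<not> (1 \<le> n - 1 + j \<and> n - 1 + j \<le> n - 1)" "n \<le> n - 1 + j \<and> n - 1 + j \<le> 2 * n - 2"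
    "n - 1 + j - (n - 1) = j" using assms by auto
  then show ?thesis unfolding row_weights_def by presburger
qed

lemma row_weights_last:
  assumes "n \<ge> 2"
  shows "row_weights n A lam (2 * n - 1) = lam - (\<Sum>j\<in>{1..n-1}. \<bar>A n j\<bar>)"
proof -
  have "\<not> (1 \<le> 2 * n - 1 \<and> 2 * n - 1 \<le> n - 1)" "\<not> (n \<le> 2 * n - 1 \<and> 2 * n - 1 \<le> 2 * n - 2)"
    using assms by auto
  then show ?thesis unfolding row_weights_def by presburger
qed

lemma row_weights_nonneg:
  "(\<Sum>j\<in>{1..n-1}. \<bar>A n j\<bar>) \<le> lam \<Longrightarrow> row_weights n A lam k \<ge> 0"
  by (simp add: row_weights_def)

lemma sum_row_weights:
  assumes "n \<ge> 2"
  shows "(\<Sum>k\<in>{1..2*n-1}. row_weights n A lam k) = lam"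
proof -
  have "row_weights n A lam j + row_weights n A lam (n - 1 + j) = \<bar>A n j\<bar>" if "j \<in> {1..n-1}" for j
    unfolding row_weights_lower[OF that] row_weights_upper[OF assms that] by auto
  then have "(\<Sum>k\<in>{1..2*n-1}. row_weights n A lam k)
      = (\<Sum>j\<in>{1..n-1}. \<bar>A n j\<bar>) + row_weights n A lam (2 * n - 1)"
    unfolding sum_split_two_blocks[OF assms] by simp
  also have "\<dots> = lam" unfolding row_weights_last[OF assms] by simp
  finally show ?thesis .
qed

lemma row_weights_diff:
  assumes "n \<ge> 2" "j \<in> {1..n-1}"
  shows "row_weights n A lam j - row_weights n A lam (n - 1 + j) = A n j"
  unfolding row_weights_lower[OF assms(2)] row_weights_upper[OF assms] by auto

locale smg_ising = smg_setting +
  fixes A :: "nat \<Rightarrow> nat \<Rightarrow> real"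
  assumes sym: "\<forall>i\<in>{1..n}. \<forall>j\<in>{1..n}. A i j = A j i"
    and rows: "\<forall>i\<in>{1..n}. (\<Sum>j\<in>{1..n}. \<bar>A i j\<bar>) \<le> lam"
begin

definition estimate :: "(nat \<Rightarrow> nat \<Rightarrow> real) \<Rightarrow> nat \<Rightarrow> nat \<Rightarrow> real" where
  "estimate xs k j = iterate xs k j - iterate xs k (n - 1 + j)"

definition gradient_noise :: "nat \<Rightarrow> (nat \<Rightarrow> nat \<Rightarrow> real) \<Rightarrow> real" where
  "gradient_noise k xs = (\<Sum>i\<in>{1..n-1}. (estimate xs k i - A n i) *
     (screening_grad n A (estimate xs k) i - g_miss n p (iterate xs k) (xs (Suc k)) i))"

lemma sum_abs_row_n_le: "(\<Sum>j\<in>{1..n-1}. \<bar>A n j\<bar>) \<le> lam"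
  by (rule sum_abs_last_row_le) (use n2 rows in auto)

lemma sum_abs_estimate_le:
  "in_simplex (iterate xs k) \<Longrightarrow> (\<Sum>j\<in>{1..n-1}. \<bar>estimate xs k j\<bar>) \<le> lam"
  unfolding estimate_def by (rule in_simplex_sum_abs_diff_le)

lemma abs_gradient_noise_le:
  assumes "\<And>t j. t \<in> {1..Suc k} \<Longrightarrow> \<bar>xs t j\<bar> \<le> 1"
  shows "\<bar>gradient_noise k xs\<bar> \<le> 4 * lam * B"
proof -
  have wk: "in_simplex (iterate xs k)" by (rule iterate_in_simplex) (use assms in auto)
  have Xk: "\<bar>xs (Suc k) j\<bar> \<le> 1" for j using assms by auto
  have "\<bar>gradient_noise k xs\<bar> \<le> (\<Sum>i\<in>{1..n-1}. \<bar>estimate xs k i - A n i\<bar> * (2 * B))"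
    unfolding gradient_noise_def
  proof (rule order_trans[OF sum_abs], rule sum_mono)
    fix i assume i: "i \<in> {1..n-1}"
    have "\<bar>screening_grad n A (estimate xs k) i\<bar> \<le> B"
      using abs_screening_grad_le[OF sum_abs_estimate_le[OF wk]] exp_lam_le_B by (rule order_trans)
    moreover have "\<bar>g_miss n p (iterate xs k) (xs (Suc k)) i\<bar> \<le> B"
      by (rule abs_g_miss_le[OF in_simplex_sum_abs_diff_le[OF wk] Xk i])
    ultimately show "\<bar>(estimate xs k i - A n i) *
        (screening_grad n A (estimate xs k) i - g_miss n p (iterate xs k) (xs (Suc k)) i)\<bar>
        \<le> \<bar>estimate xs k i - A n i\<bar> * (2 * B)"
      by (simp add: abs_mult mult_left_mono)
  qed
  also have "\<dots> = (\<Sum>i\<in>{1..n-1}. \<bar>estimate xs k i - A n i\<bar>) * (2 * B)" by (simp add: sum_distrib_right)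
  also have "\<dots> \<le> (2 * lam) * (2 * B)"
  proof (rule mult_right_mono)
    have "(\<Sum>i\<in>{1..n-1}. \<bar>estimate xs k i - A n i\<bar>) \<le> (\<Sum>i\<in>{1..n-1}. \<bar>estimate xs k i\<bar> + \<bar>A n i\<bar>)"
      by (intro sum_mono) auto
    also have "\<dots> \<le> 2 * lam"
      using sum_abs_estimate_le[OF wk] sum_abs_row_n_le by (simp add: sum.distrib)
    finally show "(\<Sum>i\<in>{1..n-1}. \<bar>estimate xs k i - A n i\<bar>) \<le> 2 * lam" .
  qed (use B_pos in auto)
  finally show ?thesis by simp
qed

text \<open>Conditionally on the first \<open>k\<close> samples the iterate is fixed and the fresh sample
  gives an unbiased gradient estimate.\<close>
lemma expectation_gradient_noise:
  fixes xs :: "nat \<Rightarrow> nat \<Rightarrow> real"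
  shows "measure_pmf.expectation (miss_pmf n A p) (\<lambda>y. gradient_noise k (xs(Suc k := y))) = 0"
proof -
  let ?M = "miss_pmf n A p"
  have int: "integrable (measure_pmf ?M) f" for f :: "_ \<Rightarrow> real"
    by (rule integrable_measure_pmf_finite[OF finite_set_pmf_miss])
  have same: "iterate (xs(Suc k := y)) k = iterate xs k" for y by (rule iterate_cong) auto
  have "measure_pmf.expectation ?M (\<lambda>y. gradient_noise k (xs(Suc k := y)))
      = (\<Sum>i\<in>{1..n-1}. measure_pmf.expectation ?M (\<lambda>y. (estimate xs k i - A n i) *
          (screening_grad n A (estimate xs k) i - g_miss n p (iterate xs k) y i)))"
    unfolding gradient_noise_def estimate_def same by (simp add: Bochner_Integration.integral_sum[OF int])
  also have "\<dots> = (\<Sum>i\<in>{1..n-1}. (estimate xs k i - A n i) *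
      (screening_grad n A (estimate xs k) i - measure_pmf.expectation ?M (\<lambda>y. g_miss n p (iterate xs k) y i)))"
    by (simp add: Bochner_Integration.integral_diff[OF int int] measure_pmf.prob_space)
  also have "\<dots> = 0"
    using expectation_g_miss[OF n2 p_bnd] unfolding estimate_def by (intro sum.neutral) auto
  finally show ?thesis .
qed

lemma gradient_noise_martingale:
  "bounded_martingale_differences (miss_pmf n A p) gradient_noise T (4 * lam * B)"
proof
  show "0 \<le> 4 * lam * B" using lam_pos B_pos by simp
next
  fix k and xs ys :: "nat \<Rightarrow> nat \<Rightarrow> real" assume eq: "\<And>j. j \<in> {1..Suc k} \<Longrightarrow> xs j = ys j"
  have "iterate xs k = iterate ys k" by (rule iterate_cong) (use eq in auto)
  moreover have "xs (Suc k) = ys (Suc k)" using eq by auto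
  ultimately show "gradient_noise k xs = gradient_noise k ys" unfolding gradient_noise_def estimate_def by simp
next
  fix k and xs :: "nat \<Rightarrow> nat \<Rightarrow> real" assume "\<And>j. j \<in> {1..Suc k} \<Longrightarrow> xs j \<in> set_pmf (miss_pmf n A p)"
  then show "\<bar>gradient_noise k xs\<bar> \<le> 4 * lam * B"
    by (intro abs_gradient_noise_le) (auto intro: abs_set_pmf_miss_le)
qed (rule expectation_gradient_noise)

lemma excess_loss_le:
  "screening_loss n A (estimate xs k) - screening_loss n A (A n)
   \<le> gradient_noise k xs + (\<Sum>i\<in>{1..n-1}. (estimate xs k i - A n i) * g_miss n p (iterate xs k) (xs (Suc k)) i)"
proof -
  have "screening_loss n A (estimate xs k)
      + (\<Sum>i\<in>{1..n-1}. screening_grad n A (estimate xs k) i * (A n i - estimate xs k i))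
      \<le> screening_loss n A (A n)"
    by (rule screening_loss_tangent_le)
  moreover have "(\<Sum>i\<in>{1..n-1}. screening_grad n A (estimate xs k) i * (A n i - estimate xs k i))
      = - gradient_noise k xs - (\<Sum>i\<in>{1..n-1}. (estimate xs k i - A n i) * g_miss n p (iterate xs k) (xs (Suc k)) i)"
    unfolding gradient_noise_def by (simp add: sum_negf[symmetric] sum_subtractf[symmetric] algebra_simps)
  ultimately show ?thesis by linarith
qed

lemma linearised_regret_le:
  assumes "\<And>t j. t \<in> {1..T} \<Longrightarrow> \<bar>xs t j\<bar> \<le> 1"
  shows "(\<Sum>k<T. \<Sum>i\<in>{1..n-1}. (estimate xs k i - A n i) * g_miss n p (iterate xs k) (xs (Suc k)) i)
         \<le> lam * ln num_weights / \<eta> + 8 * real T * \<eta> * B\<^sup>2 * lam"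
proof -
  have "(\<Sum>i\<in>{1..num_weights}. (iterate xs k i - row_weights n A lam i) * G_miss n p (iterate xs k) (xs (Suc k)) i)
      = (\<Sum>i\<in>{1..n-1}. (estimate xs k i - A n i) * g_miss n p (iterate xs k) (xs (Suc k)) i)" for k
    unfolding num_weights_def sum_mult_G_miss[OF n2] estimate_def
    by (intro sum.cong refl) (use row_weights_diff[OF n2] in \<open>auto simp: algebra_simps\<close>)
  moreover have "(\<Sum>k<T. \<Sum>i\<in>{1..num_weights}.
      (iterate xs k i - row_weights n A lam i) * G_miss n p (iterate xs k) (xs (Suc k)) i)
      \<le> lam * ln num_weights / \<eta> + 8 * real T * \<eta> * B\<^sup>2 * lam"
    by (rule regret_le)
       (use assms row_weights_nonneg[where n = n and A = A and lam = lam] sum_abs_row_n_le sum_row_weights[OF n2]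
        in \<open>auto simp: num_weights_def\<close>)
  ultimately show ?thesis by simp
qed

lemma excess_loss_sum_le:
  assumes "\<And>t j. t \<in> {1..T} \<Longrightarrow> \<bar>xs t j\<bar> \<le> 1"
  shows "(\<Sum>k<T. screening_loss n A (estimate xs k) - screening_loss n A (A n))
         \<le> (\<Sum>k<T. gradient_noise k xs) + (lam * ln num_weights / \<eta> + 8 * real T * \<eta> * B\<^sup>2 * lam)"
proof -
  have "(\<Sum>k<T. screening_loss n A (estimate xs k) - screening_loss n A (A n))
      \<le> (\<Sum>k<T. gradient_noise k xs
          + (\<Sum>i\<in>{1..n-1}. (estimate xs k i - A n i) * g_miss n p (iterate xs k) (xs (Suc k)) i))"
    by (intro sum_mono excess_loss_le)
  moreover have "(\<Sum>k<T. \<Sum>i\<in>{1..n-1}. (estimate xs k i - A n i) * g_miss n p (iterate xs k) (xs (Suc k)) i)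
      \<le> lam * ln num_weights / \<eta> + 8 * real T * \<eta> * B\<^sup>2 * lam"
    by (rule linearised_regret_le) (rule assms)
  ultimately show ?thesis by (simp add: sum.distrib)
qed

lemma smg_output_in_simplex:
  assumes "T > 0" and "\<And>t j. t \<in> {1..T} \<Longrightarrow> \<bar>xs t j\<bar> \<le> 1"
  shows "in_simplex (smg_output n p lam \<eta> T xs)"
proof -
  have wk: "in_simplex (iterate xs k)" if "k < T" for k
    by (rule iterate_in_simplex) (use assms that in auto)
  have "(\<Sum>k<T. iterate xs k i) > 0" if "i \<in> {1..num_weights}" for i
    using wk that assms(1) unfolding in_simplex_def by (intro sum_pos) auto
  moreover have "(\<Sum>i\<in>{1..num_weights}. \<Sum>k<T. iterate xs k i) = real T * lam"
    using wk by (subst sum.swap) (simp add: in_simplex_def)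
  ultimately show ?thesis
    unfolding in_simplex_def smg_output_def using assms(1)
    by (simp add: sum_divide_distrib[symmetric])
qed

lemma output_error_sq_le:
  assumes T: "T > 0" and X: "\<And>t j. t \<in> {1..T} \<Longrightarrow> \<bar>xs t j\<bar> \<le> 1" and i: "i \<in> {1..n-1}"
  shows "real T * (exp (- 3 * lam) / (2 * (1 + 2 * lam)))
           * (smg_output n p lam \<eta> T xs i - smg_output n p lam \<eta> T xs (n - 1 + i) - A n i)\<^sup>2
         \<le> (\<Sum>k<T. screening_loss n A (estimate xs k) - screening_loss n A (A n))"
proof -
  define \<theta> where "\<theta> j = smg_output n p lam \<eta> T xs j - smg_output n p lam \<eta> T xs (n - 1 + j)" for j
  have \<theta>_avg: "\<theta> = (\<lambda>j. (\<Sum>k<T. estimate xs k j) / real T)"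
    unfolding \<theta>_def smg_output_def estimate_def by (simp add: sum_subtractf diff_divide_distrib)
  have "(\<Sum>j\<in>{1..n-1}. \<bar>\<theta> j\<bar>) \<le> lam"
    unfolding \<theta>_def by (rule in_simplex_sum_abs_diff_le[OF smg_output_in_simplex[OF T X]])
  then have growth: "exp (- 3 * lam) / (2 * (1 + 2 * lam)) * (\<theta> i - A n i)\<^sup>2
      \<le> screening_loss n A \<theta> - screening_loss n A (A n)"
    using screening_loss_quadratic_growth[OF n2 sym lam_pos rows i] by simp
  have "real T * (exp (- 3 * lam) / (2 * (1 + 2 * lam))) * (\<theta> i - A n i)\<^sup>2
      \<le> real T * (screening_loss n A \<theta> - screening_loss n A (A n))"
    unfolding mult.assoc by (rule mult_left_mono[OF growth]) simp
  also have "\<dots> = real T * screening_loss n A \<theta> - real T * screening_loss n A (A n)"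
    by (simp add: right_diff_distrib)
  also have "\<dots> \<le> (\<Sum>k<T. screening_loss n A (estimate xs k)) - real T * screening_loss n A (A n)"
    unfolding \<theta>_avg using screening_loss_average_le[OF T] by simp
  finally show ?thesis unfolding \<theta>_def by (simp add: sum_subtractf)
qed

end

section \<open>Choice of parameters\<close>

lemma lam_sq_le_screening_curvature:
  fixes lam :: real
  assumes "lam \<ge> 0"
  shows "lam\<^sup>2 / (16 * exp (10 * lam)) \<le> (exp (- 3 * lam) / (2 * (1 + 2 * lam)))\<^sup>2"
proof -
  have "(lam * (1 + 2 * lam))\<^sup>2 \<le> (2 * exp (2 * lam))\<^sup>2"
    using mult_one_plus_double_le_exp[OF assms] assms by (intro power_mono) auto
  also have "(2 * exp (2 * lam))\<^sup>2 = 4 * exp (4 * lam)" by (simp add: power2_eq_square exp_add[symmetric])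
  finally have "lam\<^sup>2 * (1 + 2 * lam)\<^sup>2 \<le> 4 * exp (4 * lam)" by (simp add: power_mult_distrib)
  then have "lam\<^sup>2 \<le> 4 * exp (4 * lam) / (1 + 2 * lam)\<^sup>2"
    using assms by (simp add: field_simps)
  then have "lam\<^sup>2 / (16 * exp (10 * lam)) \<le> 4 * exp (4 * lam) / (1 + 2 * lam)\<^sup>2 / (16 * exp (10 * lam))"
    by (rule divide_right_mono) simp
  also have "\<dots> = (exp (- 3 * lam) / (2 * (1 + 2 * lam)))\<^sup>2"
  proof -
    have e: "exp (- 3 * lam) ^ 2 = exp (4 * lam) / exp (10 * lam)"
      by (simp add: power2_eq_square exp_add[symmetric] exp_diff[symmetric])
    have "1 + 2 * lam \<noteq> 0" using assms by simp
    then show ?thesis unfolding power_divide e by (simp add: field_simps) (simp add: power2_eq_square algebra_simps)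
  qed
  finally show ?thesis .
qed

lemma error_sq_le_of_excess_loss:
  fixes T lam B L \<epsilon> d :: real
  assumes T: "T > 0" and lam: "lam > 0" and L: "L > 0" and e: "\<epsilon> > 0"
    and Tb: "3600 / \<epsilon>^4 * B\<^sup>2 * exp (10 * lam) * L \<le> T"
    and main: "T * (exp (- 3 * lam) / (2 * (1 + 2 * lam))) * d\<^sup>2 \<le> 15 * lam * B * sqrt (T * L)"
  shows "d\<^sup>2 \<le> \<epsilon>\<^sup>2"
proof -
  define c where "c = exp (- 3 * lam) / (2 * (1 + 2 * lam))"
  have c: "c > 0" unfolding c_def using lam by simp
  have "(T * c * d\<^sup>2)\<^sup>2 \<le> (15 * lam * B * sqrt (T * L))\<^sup>2"
    using main T c unfolding c_def[symmetric] by (intro power_mono) auto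
  also have "\<dots> = 225 * lam\<^sup>2 * T * (B\<^sup>2 * L)" using T L by (simp add: power_mult_distrib)
  also have "\<dots> \<le> 225 * lam\<^sup>2 * T * (T * \<epsilon>^4 / (3600 * exp (10 * lam)))"
    using Tb e T by (intro mult_left_mono) (auto simp: field_simps)
  also have "\<dots> = (T * \<epsilon>\<^sup>2)\<^sup>2 * (lam\<^sup>2 / (16 * exp (10 * lam)))"
    by (simp add: power2_eq_square power4_eq_xxxx field_simps)
  also have "\<dots> \<le> (T * \<epsilon>\<^sup>2)\<^sup>2 * c\<^sup>2"
    unfolding c_def using lam by (intro mult_left_mono lam_sq_le_screening_curvature) auto
  finally have "(T * c)\<^sup>2 * (d\<^sup>2)\<^sup>2 \<le> (T * c)\<^sup>2 * (\<epsilon>\<^sup>2)\<^sup>2" by (simp add: power_mult_distrib mult_ac)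
  then have "(d\<^sup>2)\<^sup>2 \<le> (\<epsilon>\<^sup>2)\<^sup>2" using T c by simp
  then show ?thesis by (rule power2_le_imp_le) simp
qed

lemma deviation_plus_regret_le:
  fixes T K d l L :: real
  assumes "T > 0" "K \<ge> 0" "0 \<le> d" "d \<le> L" "0 \<le> l" "l \<le> 2 * L"
  shows "4 * K * sqrt (2 * T * d) + 6 * K * sqrt (T * l) \<le> 15 * K * sqrt (T * L)"
proof -
  have "sqrt (2 * T * d) \<le> sqrt 2 * sqrt (T * L)"
    using assms by (simp add: real_sqrt_mult[symmetric] mult_left_mono)
  moreover have "sqrt (T * l) \<le> sqrt 2 * sqrt (T * L)"
    using assms by (simp add: real_sqrt_mult[symmetric] mult_left_mono mult.left_commute)
  ultimately have "4 * K * sqrt (2 * T * d) + 6 * K * sqrt (T * l)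
      \<le> 4 * K * (sqrt 2 * sqrt (T * L)) + 6 * K * (sqrt 2 * sqrt (T * L))"
    using assms(2) by (intro add_mono mult_left_mono) auto
  also have "\<dots> = 10 * K * (sqrt 2 * sqrt (T * L))" by simp
  also have "\<dots> \<le> 10 * K * (3/2 * sqrt (T * L))"
  proof -
    have "sqrt 2 \<le> (3/2::real)" by (rule real_le_lsqrt) (auto simp: power2_eq_square)
    then show ?thesis using assms by (intro mult_left_mono mult_right_mono) auto
  qed
  finally show ?thesis by simp
qed

lemma regret_term_eq:
  fixes lam B T l \<eta> :: real
  assumes T: "T > 0" and l: "l \<ge> 0" and B: "B > 0" and \<eta>: "\<eta> = sqrt (l / T) / (2 * B)"
  shows "lam * l / \<eta> + 8 * T * \<eta> * B\<^sup>2 * lam = 6 * lam * B * sqrt (T * l)"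
proof -
  define r where "r = sqrt (T * l)"
  have r2: "r * r = T * l" unfolding r_def using T l by simp
  have "sqrt (l / T) = r / T"
    unfolding r_def using T by (simp add: real_sqrt_divide real_sqrt_mult field_simps)
  then have \<eta>_r: "\<eta> = r / (2 * B * T)" using \<eta> by simp
  show ?thesis
  proof (cases "r = 0")
    case True
    then show ?thesis using \<eta>_r r2 T by (simp add: r_def)
  next
    case False
    then have "lam * l / \<eta> = 2 * lam * B * (r * r) / r" unfolding \<eta>_r r2 using T B by (simp add: field_simps)
    also have "\<dots> = 2 * lam * B * r" using False by simp
    finally have "lam * l / \<eta> = 2 * lam * B * r" .
    moreover have "8 * T * \<eta> * B\<^sup>2 * lam = 4 * lam * B * r"
      unfolding \<eta>_r using T B by (simp add: field_simps power2_eq_square)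
    ultimately show ?thesis unfolding r_def by simp
  qed
qed
lemma ln_sample_bounds:
  fixes \<delta> :: real
  assumes "n \<ge> 2" "0 < \<delta>" "\<delta> < 1"
  shows "0 < ln (real n / \<delta>)" "ln (1 / \<delta>) \<le> ln (real n / \<delta>)"
    "ln (real (2 * n - 1)) \<le> 2 * ln (real n / \<delta>)"
proof -
  have n: "real n \<ge> 2" using assms(1) by simp
  show "0 < ln (real n / \<delta>)" using n assms by (simp add: field_simps)
  show "ln (1 / \<delta>) \<le> ln (real n / \<delta>)" using n assms by (simp add: divide_right_mono)
  have "real (2 * n - 1) = 2 * real n - 1" using assms(1) by (simp add: of_nat_diff)
  also have "\<dots> \<le> real n ^ 2" using zero_le_power2[of "real n - 1"] by (simp add: power2_eq_square algebra_simps)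
  finally have "real (2 * n - 1) \<le> real n ^ 2" .
  then have "ln (real (2 * n - 1)) \<le> ln (real n ^ 2)" by (rule ln_mono) (use assms(1) in simp)
  also have "\<dots> = 2 * ln (real n)" by (simp add: ln_realpow)
  also have "ln (real n) \<le> ln (real n / \<delta>)" using n assms by (simp add: le_divide_eq)
  finally show "ln (real (2 * n - 1)) \<le> 2 * ln (real n / \<delta>)" by simp
qed

lemma one_minus_Max_missing:
  fixes p :: "nat \<Rightarrow> real"
  assumes "n \<ge> 1" and "\<forall>i\<in>{1..n}. 0 \<le> p i \<and> p i < 1"
  shows "0 < 1 - Max (p ` {1..n})" "\<forall>i\<in>{1..n}. 1 - Max (p ` {1..n}) \<le> 1 - p i"
proof -
  have fin: "finite (p ` {1..n})" "p ` {1..n} \<noteq> {}" using assms(1) by auto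
  have "Max (p ` {1..n}) \<in> p ` {1..n}" using fin by (rule Max_in)
  then show "0 < 1 - Max (p ` {1..n})" using assms(2) by auto
  show "\<forall>i\<in>{1..n}. 1 - Max (p ` {1..n}) \<le> 1 - p i" using fin by auto
qed

lemma sample_size_powi_eq:
  fixes \<epsilon> q lam L :: real
  shows "3600 * \<epsilon> powi - 4 * q powi - 4 * exp ((2 / q + 10) * lam) * L
       = 3600 / \<epsilon>^4 * (exp (lam / q) / q\<^sup>2)\<^sup>2 * exp (10 * lam) * L"
proof -
  have "exp ((2 / q + 10) * lam) = (exp (lam / q))\<^sup>2 * exp (10 * lam)"
    by (simp add: power2_eq_square exp_add[symmetric] algebra_simps add_divide_distrib)
  then show ?thesis by (simp add: power_int_minus power_divide divide_inverse power_mult_distrib power_inverse mult_ac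
        flip: power_mult)
qed

context smg_ising
begin

lemma excess_loss_sum_le_of_noise:
  assumes T: "T > 0" and X: "\<And>t j. t \<in> {1..T} \<Longrightarrow> \<bar>xs t j\<bar> \<le> 1"
    and \<eta>_eq: "\<eta> = sqrt (ln num_weights / real T) / (2 * B)"
    and d: "0 \<le> d" "d \<le> L" and L: "ln num_weights \<le> 2 * L"
    and noise: "(\<Sum>k<T. gradient_noise k xs) \<le> 4 * lam * B * sqrt (2 * real T * d)"
  shows "(\<Sum>k<T. screening_loss n A (estimate xs k) - screening_loss n A (A n)) \<le> 15 * lam * B * sqrt (real T * L)"
proof -
  have ln_nw: "ln num_weights \<ge> 0" using num_weights_ge_3 by simp
  have "(\<Sum>k<T. screening_loss n A (estimate xs k) - screening_loss n A (A n))
      \<le> (\<Sum>k<T. gradient_noise k xs) + (lam * ln num_weights / \<eta> + 8 * real T * \<eta> * B\<^sup>2 * lam)"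
    by (rule excess_loss_sum_le) (rule X)
  also have "lam * ln num_weights / \<eta> + 8 * real T * \<eta> * B\<^sup>2 * lam = 6 * lam * B * sqrt (real T * ln num_weights)"
    by (rule regret_term_eq) (use T \<eta>_eq B_pos ln_nw in auto)
  also have "(\<Sum>k<T. gradient_noise k xs) + 6 * lam * B * sqrt (real T * ln num_weights)
      \<le> 4 * lam * B * sqrt (2 * real T * d) + 6 * lam * B * sqrt (real T * ln num_weights)"
    using noise by simp
  also have "\<dots> \<le> 15 * lam * B * sqrt (real T * L)"
    using deviation_plus_regret_le[where T = "real T" and K = "lam * B" and d = d and L = L and l = "ln num_weights"]
      T d L ln_nw lam_pos B_pos by (simp add: mult.assoc)
  finally show ?thesis .
qed

lemma smg_output_error_le:
  assumes T: "T > 0" and X: "\<And>t j. t \<in> {1..T} \<Longrightarrow> \<bar>xs t j\<bar> \<le> 1" and i: "i \<in> {1..n-1}"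
    and \<eta>_eq: "\<eta> = sqrt (ln num_weights / real T) / (2 * B)"
    and d: "0 \<le> d" "d \<le> L" and L: "0 < L" "ln num_weights \<le> 2 * L" and e: "\<epsilon> > 0"
    and Tb: "3600 / \<epsilon>^4 * B\<^sup>2 * exp (10 * lam) * L \<le> real T"
    and noise: "(\<Sum>k<T. gradient_noise k xs) \<le> 4 * lam * B * sqrt (2 * real T * d)"
  shows "\<bar>smg_output n p lam \<eta> T xs i - smg_output n p lam \<eta> T xs (n - 1 + i) - A n i\<bar> \<le> \<epsilon>"
proof -
  have "real T > 0" using T by simp
  then have "(smg_output n p lam \<eta> T xs i - smg_output n p lam \<eta> T xs (n - 1 + i) - A n i)\<^sup>2 \<le> \<epsilon>\<^sup>2"
  proof (rule error_sq_le_of_excess_loss[OF _ lam_pos L(1) e Tb])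
    have "real T * (exp (- 3 * lam) / (2 * (1 + 2 * lam)))
        * (smg_output n p lam \<eta> T xs i - smg_output n p lam \<eta> T xs (n - 1 + i) - A n i)\<^sup>2
        \<le> (\<Sum>k<T. screening_loss n A (estimate xs k) - screening_loss n A (A n))"
      by (rule output_error_sq_le[OF T X i])
    also have "\<dots> \<le> 15 * lam * B * sqrt (real T * L)"
      by (rule excess_loss_sum_le_of_noise[OF T _ \<eta>_eq d L(2) noise]) (rule X)
    finally show "real T * (exp (- 3 * lam) / (2 * (1 + 2 * lam)))
        * (smg_output n p lam \<eta> T xs i - smg_output n p lam \<eta> T xs (n - 1 + i) - A n i)\<^sup>2
        \<le> 15 * lam * B * sqrt (real T * L)" .
  qed
  then show ?thesis using e by (metis abs_le_square_iff abs_of_pos)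
qed

lemma prob_gradient_noise_ge_le:
  fixes \<delta> :: real
  assumes "T > 0" "0 < \<delta>" "\<delta> < 1"
  shows "measure_pmf.prob (miss_samples n A p T)
           {xs. 4 * lam * B * sqrt (2 * real T * ln (1 / \<delta>)) \<le> (\<Sum>k<T. gradient_noise k xs)} \<le> \<delta>"
proof -
  define c where "c = 4 * lam * B"
  define a where "a = c * sqrt (2 * real T * ln (1 / \<delta>))"
  have c: "c > 0" unfolding c_def using lam_pos B_pos by simp
  have lnd: "ln (1 / \<delta>) > 0" using assms by simp
  have "measure_pmf.prob (miss_samples n A p T) {xs. a \<le> (\<Sum>k<T. gradient_noise k xs)}
      \<le> exp (- (a\<^sup>2) / (2 * real T * c\<^sup>2))"
    unfolding miss_samples_def using gradient_noise_martingale[of T, folded c_def] c assms lnd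
    by (intro bounded_martingale_differences.prob_sum_ge_le) (auto simp: a_def)
  also have "- (a\<^sup>2) / (2 * real T * c\<^sup>2) = ln \<delta>"
  proof -
    have "a\<^sup>2 = c\<^sup>2 * (2 * real T * ln (1 / \<delta>))" unfolding a_def using assms lnd by (simp add: power_mult_distrib)
    then show ?thesis using c assms by (simp add: ln_div)
  qed
  finally show ?thesis using assms unfolding a_def c_def by simp
qed

end

lemma smg_recovery:
  fixes A :: "nat \<Rightarrow> nat \<Rightarrow> real" and p :: "nat \<Rightarrow> real" and T :: nat
  assumes n2: "n \<ge> 2" and sym: "\<forall>i\<in>{1..n}. \<forall>j\<in>{1..n}. A i j = A j i"
    and lam: "lam > 0" and rows: "\<forall>i\<in>{1..n}. (\<Sum>j\<in>{1..n}. \<bar>A i j\<bar>) \<le> lam"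
    and pb: "\<forall>i\<in>{1..n}. 0 \<le> p i \<and> p i < 1"
    and eps: "\<epsilon> > 0" and \<delta>: "0 < \<delta>" "\<delta> < 1"
    and T_log: "real T \<ge> 16 * ln (real (2 * n - 1))"
    and T_large: "real T \<ge> 3600 * \<epsilon> powi (-4) * (1 - Max (p ` {1..n})) powi (-4)
                    * exp ((2 / (1 - Max (p ` {1..n})) + 10) * lam) * ln (real n / \<delta>)"
    and \<eta>: "\<eta> = (1 - Max (p ` {1..n}))^2 / 2 * exp (- lam / (1 - Max (p ` {1..n})))
                 * sqrt (ln (real (2 * n - 1)) / real T)"
  shows "measure_pmf.prob (miss_samples n A p T)
           {xs. \<forall>i\<in>{1..n-1}. \<bar>smg_output n p lam \<eta> T xs i - smg_output n p lam \<eta> T xs (n - 1 + i) - A n i\<bar> \<le> \<epsilon>}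
         \<ge> 1 - \<delta>"
proof -
  define q where "q = 1 - Max (p ` {1..n})"
  define B where "B = exp (lam / q) / q\<^sup>2"
  define L where "L = ln (real n / \<delta>)"
  define l where "l = ln (real (2 * n - 1))"
  have q: "0 < q" "\<forall>i\<in>{1..n}. q \<le> 1 - p i" using one_minus_Max_missing[OF _ pb] n2 unfolding q_def by auto
  have L: "0 < L" "ln (1 / \<delta>) \<le> L" "l \<le> 2 * L" using ln_sample_bounds[OF n2 \<delta>] unfolding L_def l_def by auto
  have l: "0 < l" unfolding l_def using n2 by simp
  have T_large': "3600 / \<epsilon>^4 * B\<^sup>2 * exp (10 * lam) * L \<le> real T"
    using T_large unfolding sample_size_powi_eq q_def[symmetric] B_def L_def .
  have "0 < 3600 / \<epsilon>^4 * B\<^sup>2 * exp (10 * lam) * L" using eps q L unfolding B_def by simp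
  then have T: "T > 0" using T_large' by simp
  have \<eta>_eq: "\<eta> = sqrt (l / real T) / (2 * B)"
    unfolding \<eta> q_def[symmetric] B_def l_def using q by (simp add: exp_minus field_simps)
  have "sqrt (l / real T) \<le> sqrt (1 / 16)" using T_log T unfolding l_def by (simp add: divide_le_eq)
  then have "\<eta> * (2 * B) \<le> 1 / 4" using q by (simp add: \<eta>_eq B_def real_sqrt_divide)
  then interpret smg: smg_ising n p lam \<eta> q A
    using n2 pb q lam sym rows l T unfolding B_def by unfold_locales (auto simp: \<eta>_eq B_def)
  have \<eta>_nw: "\<eta> = sqrt (ln smg.num_weights / real T) / (2 * smg.B)"
    unfolding smg.num_weights_def smg.B_def B_def[symmetric] l_def[symmetric] by (rule \<eta>_eq)
  show ?thesis
  proof (rule prob_ge_of_prob_exceptional_le[OF smg.prob_gradient_noise_ge_le[OF T \<delta>]], intro CollectI ballI)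
    fix xs i assume xs: "xs \<in> set_pmf (miss_samples n A p T)" and i: "i \<in> {1..n-1}"
      and small: "xs \<notin> {xs. 4 * lam * smg.B * sqrt (2 * real T * ln (1 / \<delta>)) \<le> (\<Sum>k<T. smg.gradient_noise k xs)}"
    show "\<bar>smg_output n p lam \<eta> T xs i - smg_output n p lam \<eta> T xs (n - 1 + i) - A n i\<bar> \<le> \<epsilon>"
      by (rule smg.smg_output_error_le[OF T _ i \<eta>_nw _ L(2) L(1) _ eps])
         (use abs_miss_samples_le[OF xs] small L \<delta> T_large' in \<open>auto simp: smg.num_weights_def l_def smg.B_def B_def\<close>)
  qed
qed

theorem mainTheorem6:
  "\<exists>K::real. K > 0 \<and>
    (\<forall>(n::nat) (A::nat \<Rightarrow> nat \<Rightarrow> real) (lam::real) (p::nat \<Rightarrow> real) (\<epsilon>::real) (\<delta>::real) (T::nat).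
      n \<ge> 2 \<longrightarrow>
      (\<forall>i\<in>{1..n}. \<forall>j\<in>{1..n}. A i j = A j i) \<longrightarrow>
      (\<forall>i\<in>{1..n}. A i i = 0) \<longrightarrow>
      lam > 0 \<longrightarrow>
      (\<forall>i\<in>{1..n}. (\<Sum>j\<in>{1..n}. \<bar>A i j\<bar>) \<le> lam) \<longrightarrow>
      (\<forall>i\<in>{1..n}. 0 \<le> p i \<and> p i < 1) \<longrightarrow>
      \<epsilon> > 0 \<longrightarrow> 0 < \<delta> \<longrightarrow> \<delta> < 1 \<longrightarrow>
      (let pmax = Max (p ` {1..n}) in
        real T \<ge> 16 * ln (real (2 * n - 1)) \<longrightarrow>
        real T \<ge> K * \<epsilon> powi (-4) * (1 - pmax) powi (-4)
                  * exp ((2 / (1 - pmax) + 10) * lam) * ln (real n / \<delta>) \<longrightarrow>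
        (let eta = (1 - pmax)^2 / 2 * exp (- lam / (1 - pmax)) * sqrt (ln (real (2 * n - 1)) / real T) in
          measure_pmf.prob (miss_samples n A p T)
            {xs. \<forall>i\<in>{1..n-1}. \<bar>smg_output n p lam eta T xs i - smg_output n p lam eta T xs (n - 1 + i) - A n i\<bar> \<le> \<epsilon>}
          \<ge> 1 - \<delta>)))"
  unfolding Let_def by (intro exI[of _ 3600] conjI allI impI smg_recovery refl) simp_all

end
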